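(* Let $\mathcal{I}$ be a meager ideal on $\mathbf{N}$ and let $A=(a_{n,i})$ be a regular matrix. Then the set $$\{x\in(0,1]: \Gamma_b^k(x,\mathcal{I},A)\supseteq\Delta_b^k \text{ for all integers } b\ge2,\ k\ge1\}$$ is comeager in $(0,1]$.
   Context: For an integer $b\ge 2$ and $x\in(0,1]$, write $x=\sum_{n\ge 1} d_{b,n}(x)/b^n$ for the unique nonterminating $b$-adic expansion, with digits $d_{b,n}(x)\in\{0,\dots,b-1\}$. Let $S_b^k$ be the set of strings $\bm{s}=s_1\cdots s_k$ of length $k$ over $\{0,\dots,b-1\}$. For $\bm{s}\in S_b^k$ and $n\ge1$ put $\pi_{b,\bm{s},n}(x)=\frac{1}{n}\#\{i\in\{1,\dots,n\}: d_{b,i+j-1}(x)=s_j \text{ for all } j=1,\dots,k\}$, and $\bm{\pi}^k_{b,n}(x)=(\pi_{b,\bm{s},n}(x):\bm{s}\in S_b^k)\in\mathbf{R}^{b^k}$. Let $\Delta_b^k=\{(p_{\bm{s}})_{\bm{s}\in S_b^k}\in\mathbf{R}^{b^k}: \sum_{\bm{s}}p_{\bm{s}}=1,\ p_{\bm{s}}\ge0,\ \sum_{s_0}p_{s_0\bm{s}}=\sum_{s_k}p_{\bm{s}s_k} \text{ for all } \bm{s}\in S_b^{k-1}\}$ (concatenated strings). An ideal on $\mathbf{N}$ is a family $\mathcal{I}\subseteq\mathcal{P}(\mathbf{N})$ closed under finite unions and subsets, containing all finite sets, and $\ne\mathcal{P}(\mathbf{N})$; it is meager if it is a meager subset of $\mathcal{P}(\mathbf{N})$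 with the Cantor-space topology. A regular matrix is an infinite real matrix $A=(a_{n,i})_{n,i\in\mathbf{N}}$ such that for every $d$ and every $\mathbf{R}^d$-valued sequence $\bm{z}=(\bm{z}_i)$ converging to $\bm{\eta}$, the series $A_n\bm{z}:=\sum_i a_{n,i}\bm{z}_i$ exists for all $n$ and $\lim_n A_n\bm{z}=\bm{\eta}$. For a sequence $(x_n)$ in $\mathbf{R}^d$, $\eta$ is an $\mathcal{I}$-cluster point if $\{n: x_n\in U\}\notin\mathcal{I}$ for every open neighborhood $U$ of $\eta$. With $\bm{\pi}^k_b(x)=(\bm{\pi}^k_{b,n}(x):n\ge1)$, $\Gamma_b^k(x,\mathcal{I},A)$ denotes the set of $\mathcal{I}$-cluster points of the sequence $(A_n\bm{\pi}^k_b(x):n\ge1)$. *)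

theory Defs
  imports "HOL-Analysis.Analysis"
begin

(* The unique nonterminating b-adic expansion of x: d 0 is a dummy (= 0),
   digits d 1, d 2, ... in {0..b-1}, x = sum_{n>=1} d n / b^n, infinitely many nonzero digits. *)
definition nonterm_expansion :: "nat \<Rightarrow> real \<Rightarrow> (nat \<Rightarrow> nat) \<Rightarrow> bool" where
  "nonterm_expansion b x d \<longleftrightarrow>
     d 0 = 0 \<and> (\<forall>n. d n < b) \<and>
     (\<lambda>n. real (d (Suc n)) / real b ^ Suc n) sums x \<and>
     infinite {n. d n \<noteq> 0}"

definition digit :: "nat \<Rightarrow> real \<Rightarrow> nat \<Rightarrow> nat" where
  "digit b x = (THE d. nonterm_expansion b x d)"

definition strings :: "nat \<Rightarrow> nat \<Rightarrow> nat list set" where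
  "strings b k = {s. length s = k \<and> set s \<subseteq> {..<b}}"

definition freq :: "nat \<Rightarrow> nat list \<Rightarrow> nat \<Rightarrow> real \<Rightarrow> real" where
  "freq b s n x = real (card {i \<in> {1..n}. \<forall>j < length s. digit b x (i + j) = s ! j}) / real n"

(* Delta_b^k as a subset of R^{S_b^k}, vectors = extensional functions on S_b^k *)
definition Delta :: "nat \<Rightarrow> nat \<Rightarrow> (nat list \<Rightarrow> real) set" where
  "Delta b k = {p. p \<in> extensional (strings b k) \<and>
      (\<Sum>s\<in>strings b k. p s) = 1 \<and> (\<forall>s\<in>strings b k. p s \<ge> 0) \<and>
      (\<forall>s\<in>strings b (k - 1). (\<Sum>c<b. p (c # s)) = (\<Sum>c<b. p (s @ [c])))}"

definition is_ideal :: "nat set set \<Rightarrow> bool" where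
  "is_ideal I \<longleftrightarrow> (\<forall>A\<in>I. \<forall>B\<in>I. A \<union> B \<in> I) \<and> (\<forall>A\<in>I. \<forall>B. B \<subseteq> A \<longrightarrow> B \<in> I) \<and>
     (\<forall>F. finite F \<longrightarrow> F \<in> I) \<and> I \<noteq> Pow UNIV"

definition nowhere_dense_in :: "'a topology \<Rightarrow> 'a set \<Rightarrow> bool" where
  "nowhere_dense_in X N \<longleftrightarrow> N \<subseteq> topspace X \<and> X interior_of (X closure_of N) = {}"

definition meager_in :: "'a topology \<Rightarrow> 'a set \<Rightarrow> bool" where
  "meager_in X S \<longleftrightarrow> S \<subseteq> topspace X \<and>
     (\<exists>F. countable F \<and> (\<forall>N\<in>F. nowhere_dense_in X N) \<and> S \<subseteq> \<Union>F)"

definition comeager_in :: "'a topology \<Rightarrow> 'a set \<Rightarrow> bool" where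
  "comeager_in X S \<longleftrightarrow> meager_in X (topspace X - S)"

(* Cantor space 2^N, P(N) identified with characteristic functions *)
definition cantor_space :: "(nat \<Rightarrow> bool) topology" where
  "cantor_space = product_topology (\<lambda>_. discrete_topology (UNIV :: bool set)) UNIV"

definition meager_ideal :: "nat set set \<Rightarrow> bool" where
  "meager_ideal I \<longleftrightarrow> is_ideal I \<and> meager_in cantor_space ((\<lambda>A n. n \<in> A) ` I)"

(* regular matrix: for every d and every R^d-valued convergent sequence (coordinates j < d) *)
definition regular_matrix :: "(nat \<Rightarrow> nat \<Rightarrow> real) \<Rightarrow> bool" where
  "regular_matrix a \<longleftrightarrow>
     (\<forall>(d::nat) (z::nat \<Rightarrow> nat \<Rightarrow> real) (\<eta>::nat \<Rightarrow> real).
        (\<forall>j<d. (\<lambda>i. z i j) \<longlonglongrightarrow> \<eta> j) \<longrightarrow>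
        (\<forall>n. \<forall>j<d. summable (\<lambda>i. a n i * z i j)) \<and>
        (\<forall>j<d. (\<lambda>n. \<Sum>i. a n i * z i j) \<longlonglongrightarrow> \<eta> j))"

definition I_cluster_point :: "'a topology \<Rightarrow> nat set set \<Rightarrow> (nat \<Rightarrow> 'a) \<Rightarrow> 'a \<Rightarrow> bool" where
  "I_cluster_point X I xs \<eta> \<longleftrightarrow> \<eta> \<in> topspace X \<and>
     (\<forall>U. openin X U \<and> \<eta> \<in> U \<longrightarrow> {n. xs n \<in> U} \<notin> I)"

definition Rstrings :: "nat \<Rightarrow> nat \<Rightarrow> (nat list \<Rightarrow> real) topology" where
  "Rstrings b k = product_topology (\<lambda>_. euclideanreal) (strings b k)"

(* A_n pi^k_b(x); sequences and matrix indices start at 0, term i of pi^k_b(x) is pi^k_{b,i+1}(x) *)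
definition Api :: "(nat \<Rightarrow> nat \<Rightarrow> real) \<Rightarrow> nat \<Rightarrow> nat \<Rightarrow> real \<Rightarrow> nat \<Rightarrow> (nat list \<Rightarrow> real)" where
  "Api a b k x n = (\<lambda>s\<in>strings b k. \<Sum>i. a n i * freq b s (Suc i) x)"

definition Gamma_clust :: "nat \<Rightarrow> nat \<Rightarrow> real \<Rightarrow> nat set set \<Rightarrow> (nat \<Rightarrow> nat \<Rightarrow> real) \<Rightarrow> (nat list \<Rightarrow> real) set" where
  "Gamma_clust b k x I a = {\<eta>. I_cluster_point (Rstrings b k) I (Api a b k x) \<eta>}"

end

theory Submission
  imports Defs
begin

text \<open>
  A meager ideal \<open>I\<close> admits a partition of the naturals into consecutive blocks such that
  every set containing infinitely many blocks lies outside \<open>I\<close> (Talagrand's characterization).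
  A vector \<open>\<eta>\<close> in \<open>\<Delta>\<^sub>b\<^sup>k\<close> is a nonnegative circulation on the de Bruijn graph, hence a
  nonnegative combination of cycles, so it is approximated by the vector of cyclic frequencies
  of a single word \<open>w\<close>. If the digits of \<open>x\<close> repeat \<open>w\<close> for long enough after an arbitrary
  prefix, then \<open>A\<^sub>n \<pi>\<^sup>k\<^sub>b(x)\<close> is close to that vector for every \<open>n\<close> in a whole block,
  because regular matrices preserve the limit of the frequencies of the periodic continuation
  and have absolutely summable rows. The points with this property for some block beyond any
  given one therefore form a set with nowhere dense complement, and for every \<open>x\<close> in the
  countable intersection of these sets the indices \<open>n\<close> with \<open>A\<^sub>n \<pi>\<^sup>k\<^sub>b(x)\<close> near \<open>\<eta>\<close>
  contain infinitely many blocks, so \<open>\<eta>\<close> is an \<open>I\<close>-cluster point.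
\<close>

section \<open>Meager ideals on the naturals\<close>

definition cantor_cylinder :: "nat set \<Rightarrow> nat \<Rightarrow> (nat \<Rightarrow> bool) set" where
  "cantor_cylinder Q L = {p. \<forall>n<L. p n = (n \<in> Q)}"

lemma topspace_cantor_space [simp]: "topspace cantor_space = UNIV"
  unfolding cantor_space_def by (simp add: topspace_product_topology)

lemma openin_cantor_cylinder: "openin cantor_space (cantor_cylinder Q L)"
proof -
  have "cantor_cylinder Q L = PiE UNIV (\<lambda>n. {v. n < L \<longrightarrow> v = (n \<in> Q)})"
    unfolding cantor_cylinder_def PiE_UNIV_domain by (auto simp: Pi_iff)
  moreover have "finite {n. {v. n < L \<longrightarrow> v = (n \<in> Q)} \<noteq> UNIV}"
    by (rule finite_subset[of _ "{..<L}"]) auto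
  ultimately show ?thesis
    unfolding cantor_space_def by (simp add: openin_PiE_gen)
qed

lemma indicator_in_cantor_cylinder_iff:
  "(\<lambda>n. n \<in> S) \<in> cantor_cylinder Q L \<longleftrightarrow> S \<inter> {..<L} = Q \<inter> {..<L}"
  unfolding cantor_cylinder_def by auto

lemma cantor_cylinder_mono:
  assumes "L \<le> L'" and "Q' \<inter> {..<L} = Q \<inter> {..<L}"
  shows "cantor_cylinder Q' L' \<subseteq> cantor_cylinder Q L"
proof -
  have "n \<in> Q' \<longleftrightarrow> n \<in> Q" if "n < L" for n
    using that assms(2) by (simp add: set_eq_iff) (metis lessThan_iff)
  then show ?thesis
    using assms(1) unfolding cantor_cylinder_def by auto
qed

lemma openin_cantor_space_cylinder:
  assumes "openin cantor_space T" and "p \<in> T"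
  obtains L where "cantor_cylinder {n. p n} L \<subseteq> T"
proof -
  obtain U where U: "finite {n. U n \<noteq> UNIV}" "p \<in> PiE UNIV U" "PiE UNIV U \<subseteq> T"
    using assms unfolding cantor_space_def openin_product_topology_alt by force
  obtain L where "{n. U n \<noteq> UNIV} \<subseteq> {..<L}"
    using U(1) finite_nat_bounded by blast
  then have "cantor_cylinder {n. p n} L \<subseteq> PiE UNIV U"
    using U(2) unfolding cantor_cylinder_def by (force simp: PiE_iff)
  with U(3) show ?thesis using that by (meson order_trans)
qed

lemma nowhere_dense_cantor_cylinder:
  assumes "nowhere_dense_in cantor_space D"
  obtains Q' L' where "L \<le> L'" "Q' \<inter> {..<L} = Q \<inter> {..<L}" "cantor_cylinder Q' L' \<inter> D = {}"
proof -
  let ?C = "cantor_cylinder Q L"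
  have "\<not> ?C \<subseteq> cantor_space closure_of D"
  proof
    assume "?C \<subseteq> cantor_space closure_of D"
    then have "?C \<subseteq> cantor_space interior_of (cantor_space closure_of D)"
      by (simp add: interior_of_maximal openin_cantor_cylinder)
    moreover have "(\<lambda>n. n \<in> Q) \<in> ?C"
      unfolding cantor_cylinder_def by simp
    ultimately show False
      using assms unfolding nowhere_dense_in_def by blast
  qed
  then obtain p where pC: "p \<in> ?C" and "p \<notin> cantor_space closure_of D"
    by blast
  then obtain T where "p \<in> T" "openin cantor_space T" "T \<inter> D = {}"
    unfolding in_closure_of by auto
  then obtain L'' where L'': "cantor_cylinder {n. p n} L'' \<subseteq> T"
    by (meson openin_cantor_space_cylinder)
  show ?thesis
  proof
    show "L \<le> max L L''" by simp
    show "{n. p n} \<inter> {..<L} = Q \<inter> {..<L}"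
      using pC unfolding cantor_cylinder_def by auto
    have "cantor_cylinder {n. p n} (max L L'') \<subseteq> cantor_cylinder {n. p n} L''"
      by (rule cantor_cylinder_mono) auto
    then show "cantor_cylinder {n. p n} (max L L'') \<inter> D = {}"
      using L'' \<open>T \<inter> D = {}\<close> by blast
  qed
qed

lemma nowhere_dense_cantor_extend_block:
  assumes D: "nowhere_dense_in cantor_space D" and \<sigma>: "\<sigma> \<subseteq> {..<N}" and "N < L" and T: "T \<subseteq> {N..<L}"
  obtains L' T' where "L \<le> L'" and "T' \<subseteq> {N..<L'}" and "T' \<inter> {..<L} = T"
    and "cantor_cylinder (\<sigma> \<union> T') L' \<inter> D = {}"
proof -
  obtain Q' L' where "L \<le> L'" and Q': "Q' \<inter> {..<L} = (\<sigma> \<union> T) \<inter> {..<L}"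
    and Q'_D: "cantor_cylinder Q' L' \<inter> D = {}"
    using nowhere_dense_cantor_cylinder[OF D] .
  define T' where "T' = Q' \<inter> {N..<L'}"
  have "T' \<inter> {..<L} = (Q' \<inter> {..<L}) \<inter> {N..}"
    using \<open>L \<le> L'\<close> unfolding T'_def by auto
  also have "\<dots> = ((\<sigma> \<union> T) \<inter> {..<L}) \<inter> {N..}"
    by (simp only: Q')
  also have "\<dots> = T"
    using T \<sigma> by auto
  finally have "T' \<inter> {..<L} = T" .
  have "Q' \<inter> {..<N} = (Q' \<inter> {..<L}) \<inter> {..<N}"
    using \<open>N < L\<close> by auto
  also have "\<dots> = ((\<sigma> \<union> T) \<inter> {..<L}) \<inter> {..<N}"
    by (simp only: Q')
  also have "\<dots> = \<sigma>"
    using T \<sigma> \<open>N < L\<close> by auto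
  finally have "(\<sigma> \<union> T') \<inter> {..<L'} = Q' \<inter> {..<L'}"
    unfolding T'_def by auto
  then have "cantor_cylinder (\<sigma> \<union> T') L' \<inter> D = {}"
    using Q'_D cantor_cylinder_mono[of L' L' "\<sigma> \<union> T'" Q'] by auto
  moreover have "T' \<subseteq> {N..<L'}"
    unfolding T'_def by auto
  ultimately show thesis
    using that \<open>L \<le> L'\<close> \<open>T' \<inter> {..<L} = T\<close> by blast
qed

lemma nowhere_dense_cantor_common_block:
  assumes "finite X" and "\<And>\<sigma> D. (\<sigma>, D) \<in> X \<Longrightarrow> \<sigma> \<subseteq> {..<N} \<and> nowhere_dense_in cantor_space D"
  shows "\<exists>L T. N < L \<and> T \<subseteq> {N..<L} \<and> (\<forall>(\<sigma>, D)\<in>X. cantor_cylinder (\<sigma> \<union> T) L \<inter> D = {})"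
  using assms
proof (induction X rule: finite_induct)
  case empty
  show ?case by (intro exI[of _ "Suc N"] exI[of _ "{}"]) auto
next
  case (insert x X)
  obtain \<sigma> D where x: "x = (\<sigma>, D)" by force
  with insert.prems have \<sigma>: "\<sigma> \<subseteq> {..<N}" and D: "nowhere_dense_in cantor_space D" by auto
  have "\<exists>L T. N < L \<and> T \<subseteq> {N..<L} \<and> (\<forall>(\<sigma>, D)\<in>X. cantor_cylinder (\<sigma> \<union> T) L \<inter> D = {})"
    by (rule insert.IH) (use insert.prems in blast)
  then obtain L T where "N < L" and T: "T \<subseteq> {N..<L}"
    and old: "\<forall>(\<sigma>, D)\<in>X. cantor_cylinder (\<sigma> \<union> T) L \<inter> D = {}"
    by blast
  obtain L' T' where "L \<le> L'" "T' \<subseteq> {N..<L'}" and T': "T' \<inter> {..<L} = T"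
    and new: "cantor_cylinder (\<sigma> \<union> T') L' \<inter> D = {}"
    using nowhere_dense_cantor_extend_block[OF D \<sigma> \<open>N < L\<close> T] .
  have "cantor_cylinder (\<sigma>' \<union> T') L' \<inter> D' = {}" if "(\<sigma>', D') \<in> X" for \<sigma>' D'
  proof -
    have "(\<sigma>' \<union> T') \<inter> {..<L} = (\<sigma>' \<union> T) \<inter> {..<L}"
      using that insert.prems T' T \<open>N < L\<close> by auto
    then have "cantor_cylinder (\<sigma>' \<union> T') L' \<subseteq> cantor_cylinder (\<sigma>' \<union> T) L"
      by (rule cantor_cylinder_mono[OF \<open>L \<le> L'\<close>])
    then show ?thesis
      using bspec[OF old that] by auto
  qed
  then have "\<forall>(\<sigma>', D')\<in>insert x X. cantor_cylinder (\<sigma>' \<union> T') L' \<inter> D' = {}"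
    using x new by auto
  then show ?case
    using \<open>N < L\<close> \<open>L \<le> L'\<close> \<open>T' \<subseteq> {N..<L'}\<close> by (intro exI[of _ L'] exI[of _ T']) auto
qed

lemma nowhere_dense_cantor_blocks:
  assumes "\<And>m. nowhere_dense_in cantor_space (D m)"
  obtains N :: "nat \<Rightarrow> nat" and T where "strict_mono N" and "\<And>j. T j \<subseteq> {N j..<N (Suc j)}"
    and "\<And>j \<sigma> m. \<sigma> \<subseteq> {..<N j} \<Longrightarrow> m \<le> j \<Longrightarrow> cantor_cylinder (\<sigma> \<union> T j) (N (Suc j)) \<inter> D m = {}"
proof -
  have "\<exists>L T. n < L \<and> T \<subseteq> {n..<L} \<and>
      (\<forall>\<sigma>\<subseteq>{..<n}. \<forall>m\<le>j. cantor_cylinder (\<sigma> \<union> T) L \<inter> D m = {})" for n j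
  proof -
    have "\<exists>L T. n < L \<and> T \<subseteq> {n..<L} \<and>
        (\<forall>(\<sigma>, E)\<in>Pow {..<n} \<times> D ` {..j}. cantor_cylinder (\<sigma> \<union> T) L \<inter> E = {})"
      by (rule nowhere_dense_cantor_common_block) (use assms in auto)
    then obtain L T where "n < L" "T \<subseteq> {n..<L}"
      and LT: "\<forall>(\<sigma>, E)\<in>Pow {..<n} \<times> D ` {..j}. cantor_cylinder (\<sigma> \<union> T) L \<inter> E = {}"
      by blast
    moreover have "cantor_cylinder (\<sigma> \<union> T) L \<inter> D m = {}" if "\<sigma> \<subseteq> {..<n}" "m \<le> j" for \<sigma> m
      using bspec[OF LT, of "(\<sigma>, D m)"] that by auto
    ultimately show ?thesis
      by (intro exI[of _ L] exI[of _ T] conjI allI impI)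
  qed
  then obtain nxt blk where nxt: "\<And>n j. n < nxt n j" "\<And>n j. blk n j \<subseteq> {n..<nxt n j}"
    and blk: "\<And>n j \<sigma> m. \<sigma> \<subseteq> {..<n} \<Longrightarrow> m \<le> j \<Longrightarrow> cantor_cylinder (\<sigma> \<union> blk n j) (nxt n j) \<inter> D m = {}"
    by metis
  define N where "N = rec_nat 0 (\<lambda>j n. nxt n j)"
  have N_Suc: "N (Suc j) = nxt (N j) j" for j
    by (simp add: N_def)
  show thesis
  proof (rule that)
    show "strict_mono N"
      by (simp add: strict_mono_Suc_iff N_Suc nxt)
    show "blk (N j) j \<subseteq> {N j..<N (Suc j)}" for j
      using nxt(2) by (simp add: N_Suc)
    show "cantor_cylinder (\<sigma> \<union> blk (N j) j) (N (Suc j)) \<inter> D m = {}" if "\<sigma> \<subseteq> {..<N j}" "m \<le> j" for j \<sigma> m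
      using blk[OF that] by (simp add: N_Suc)
  qed
qed

lemma Union_blocks_Int_lessThan:
  fixes N :: "nat \<Rightarrow> nat"
  assumes "strict_mono N" and "\<And>i. T i \<subseteq> {N i..<N (Suc i)}" and "j \<in> J"
  shows "(\<Union>i\<in>J. T i) \<inter> {..<N (Suc j)} = (\<Union>i\<in>J. T i) \<inter> {..<N j} \<union> T j"
proof -
  have "n < N j" if "i \<in> J" "n \<in> T i" "n < N (Suc j)" "i \<noteq> j" for i n
  proof (cases "i < j")
    case True
    then have "N (Suc i) \<le> N j" using assms(1) by (simp add: strict_mono_less_eq)
    moreover have "n < N (Suc i)" using assms(2)[of i] that(2) by auto
    ultimately show ?thesis by linarith
  next
    case False
    then have "N (Suc j) \<le> N i" using assms(1) that(4) by (simp add: strict_mono_less_eq)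
    moreover have "N i \<le> n" using assms(2)[of i] that(2) by auto
    ultimately show ?thesis using that(3) by linarith
  qed
  then show ?thesis
    using assms(2)[of j] assms(3) strict_monoD[OF assms(1), of j "Suc j"] by fastforce
qed

lemma meager_ideal_blocks:
  assumes "meager_ideal I"
  obtains N :: "nat \<Rightarrow> nat" where "strict_mono N"
    and "\<And>S. (\<exists>\<^sub>F j in sequentially. {N j..<N (Suc j)} \<subseteq> S) \<Longrightarrow> S \<notin> I"
proof -
  have ideal: "is_ideal I" and "meager_in cantor_space ((\<lambda>A n. n \<in> A) ` I)"
    using assms unfolding meager_ideal_def by auto
  then obtain F where "countable F" and nd: "\<And>E. E \<in> F \<Longrightarrow> nowhere_dense_in cantor_space E"
    and cover: "(\<lambda>A n. n \<in> A) ` I \<subseteq> \<Union>F"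
    unfolding meager_in_def by auto
  moreover have "{} \<in> I"
    using ideal unfolding is_ideal_def by blast
  ultimately have F: "range (from_nat_into F) = F"
    by (intro range_from_nat_into) auto
  obtain N :: "nat \<Rightarrow> nat" and T where mono: "strict_mono N" and T: "\<And>j. T j \<subseteq> {N j..<N (Suc j)}"
    and T_avoids: "\<And>j \<sigma> m. \<sigma> \<subseteq> {..<N j} \<Longrightarrow> m \<le> j \<Longrightarrow>
      cantor_cylinder (\<sigma> \<union> T j) (N (Suc j)) \<inter> from_nat_into F m = {}"
    using nowhere_dense_cantor_blocks[of "from_nat_into F"] nd F by blast
  show ?thesis
  proof (rule that[OF mono])
    fix S assume freq: "\<exists>\<^sub>F j in sequentially. {N j..<N (Suc j)} \<subseteq> S"
    show "S \<notin> I"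
    proof
      assume "S \<in> I"
      define J where "J = {j. {N j..<N (Suc j)} \<subseteq> S}"
      define S' where "S' = (\<Union>j\<in>J. T j)"
      have "S' \<subseteq> S"
        using T by (auto simp: S'_def J_def)
      then have "S' \<in> I"
        using \<open>S \<in> I\<close> ideal unfolding is_ideal_def by blast
      then obtain m where m: "(\<lambda>n. n \<in> S') \<in> from_nat_into F m"
        using cover F by blast
      obtain j where "m \<le> j" "j \<in> J"
        using freq unfolding frequently_sequentially J_def by auto
      have "S' \<inter> {..<N (Suc j)} = S' \<inter> {..<N j} \<union> T j"
        unfolding S'_def by (rule Union_blocks_Int_lessThan[OF mono T \<open>j \<in> J\<close>])
      moreover have "S' \<inter> {..<N j} \<union> T j \<subseteq> {..<N (Suc j)}"
        using T[of j] strict_monoD[OF mono, of j "Suc j"] by auto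
      ultimately have "(\<lambda>n. n \<in> S') \<in> cantor_cylinder (S' \<inter> {..<N j} \<union> T j) (N (Suc j))"
        unfolding indicator_in_cantor_cylinder_iff by blast
      then show False
        using T_avoids[of "S' \<inter> {..<N j}" j m] m \<open>m \<le> j\<close> by auto
    qed
  qed
qed

section \<open>Nonterminating b-adic expansions\<close>

definition digits_value :: "nat \<Rightarrow> (nat \<Rightarrow> nat) \<Rightarrow> nat \<Rightarrow> real" where
  "digits_value b e m = (\<Sum>i<m. real (e (Suc i)) / real b ^ Suc i)"

lemma digits_value_0 [simp]: "digits_value b e 0 = 0"
  by (simp add: digits_value_def)

lemma digits_value_Suc:
  "digits_value b e (Suc m) = digits_value b e m + real (e (Suc m)) / real b ^ Suc m"
  by (simp add: digits_value_def)

lemma digits_value_nonneg: "0 \<le> digits_value b e m"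
  unfolding digits_value_def by (auto intro: sum_nonneg)

lemma digits_value_mono: "m \<le> m' \<Longrightarrow> digits_value b e m \<le> digits_value b e m'"
  unfolding digits_value_def by (rule sum_mono2) auto

lemma digits_value_scaled_in_Nats:
  assumes "b > 0"
  shows "real b ^ m * digits_value b e m \<in> \<nat>"
proof (induction m)
  case (Suc m)
  have "real b ^ Suc m * digits_value b e (Suc m) =
      real b * (real b ^ m * digits_value b e m) + real (e (Suc m))"
    using assms by (simp add: digits_value_Suc field_simps)
  then show ?case
    using Suc by (simp add: Nats_add Nats_mult)
qed simp

lemma digits_value_diff_le:
  assumes "b \<ge> 2" and "\<forall>i<P. e (Suc i) < b" and "m \<le> P"
  shows "digits_value b e P - digits_value b e m \<le> 1 / real b ^ m - 1 / real b ^ P"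
  using assms(3,2)
proof (induction P rule: dec_induct)
  case (step P)
  have "e (Suc P) < b"
    using step.prems by blast
  then have "real (e (Suc P)) \<le> real b - 1"
    by linarith
  then have "real (e (Suc P)) / real b ^ Suc P \<le> (real b - 1) / real b ^ Suc P"
    by (simp add: divide_right_mono)
  also have "\<dots> = 1 / real b ^ P - 1 / real b ^ Suc P"
    using assms(1) by (simp add: field_simps)
  finally show ?case
    using step by (simp add: digits_value_Suc)
qed simp

lemma digits_eq_if_digits_value_eq:
  assumes "b > 0" and "\<And>m. m \<le> P \<Longrightarrow> digits_value b e m = digits_value b e' m" and "i < P"
  shows "e (Suc i) = e' (Suc i)"
proof -
  have "real (e (Suc i)) / real b ^ Suc i = real (e' (Suc i)) / real b ^ Suc i"
    using assms(2)[of i] assms(2)[of "Suc i"] assms(3) by (simp add: digits_value_Suc)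
  then show ?thesis
    using assms(1) by simp
qed

lemma digits_value_eq_ceiling:
  assumes "b > 0" and "0 < x - digits_value b e m" and "x - digits_value b e m \<le> 1 / real b ^ m"
  shows "digits_value b e m = of_int (\<lceil>x * real b ^ m\<rceil> - 1) / real b ^ m"
proof -
  have pos: "real b ^ m > 0"
    using assms(1) by simp
  obtain N where N: "real b ^ m * digits_value b e m = real N"
    using digits_value_scaled_in_Nats[OF assms(1)] by (metis Nats_cases)
  have "real b ^ m * digits_value b e m < real b ^ m * x"
    using assms(2) pos by simp
  then have "real N < x * real b ^ m"
    using N by (simp add: mult.commute)
  moreover have "x * real b ^ m \<le> real N + 1"
    using assms(3) pos N by (simp add: field_simps)
  ultimately have "real N < x * real b ^ m \<and> x * real b ^ m \<le> real N + 1" ..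
  then have "\<lceil>x * real b ^ m\<rceil> = int N + 1"
    by (simp add: ceiling_eq_iff)
  then show ?thesis
    using N pos by (simp add: field_simps)
qed

lemma nonterm_expansion_tendsto:
  "nonterm_expansion b x d \<Longrightarrow> (\<lambda>m. digits_value b d m) \<longlonglongrightarrow> x"
  by (simp add: nonterm_expansion_def sums_def digits_value_def)

lemma nonterm_expansion_remainder:
  assumes b: "b \<ge> 2" and d: "nonterm_expansion b x d"
  shows "0 < x - digits_value b d P" and "x - digits_value b d P \<le> 1 / real b ^ P"
proof -
  have lim: "(\<lambda>m. digits_value b d m) \<longlonglongrightarrow> x"
    using d by (rule nonterm_expansion_tendsto)
  have le_x: "digits_value b d m \<le> x" for m
    using incseq_le[OF _ lim] digits_value_mono by (auto simp: incseq_def)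
  obtain m where "P < m" "d m \<noteq> 0"
    using d unfolding nonterm_expansion_def infinite_nat_iff_unbounded by auto
  then obtain m' where m': "m = Suc m'" "P \<le> m'"
    by (cases m) auto
  have "0 < real (d (Suc m')) / real b ^ Suc m'"
    using \<open>d m \<noteq> 0\<close> m' b by simp
  then have "digits_value b d P < digits_value b d (Suc m')"
    using digits_value_mono[OF m'(2), of b d] by (simp add: digits_value_Suc)
  then show "0 < x - digits_value b d P"
    using le_x[of "Suc m'"] by simp
  have digits: "\<forall>i<Q. d (Suc i) < b" for Q
    using d unfolding nonterm_expansion_def by simp
  have "\<forall>\<^sub>F Q in sequentially. digits_value b d Q - digits_value b d P \<le> 1 / real b ^ P"
    unfolding eventually_sequentially
  proof (intro exI allI impI)
    fix Q assume "P \<le> Q"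
    have "digits_value b d Q - digits_value b d P \<le> 1 / real b ^ P - 1 / real b ^ Q"
      by (rule digits_value_diff_le[OF b digits \<open>P \<le> Q\<close>])
    then show "digits_value b d Q - digits_value b d P \<le> 1 / real b ^ P"
      by (smt (verit) divide_nonneg_nonneg of_nat_0_le_iff zero_le_power)
  qed
  then show "x - digits_value b d P \<le> 1 / real b ^ P"
    by (intro tendsto_upperbound[OF tendsto_diff[OF lim tendsto_const]]) auto
qed

lemma nonterm_expansion_unique:
  assumes b: "b \<ge> 2" and d: "nonterm_expansion b x d" and d': "nonterm_expansion b x d'"
  shows "d = d'"
proof
  fix n
  have "digits_value b d m = digits_value b d' m" for m
    using digits_value_eq_ceiling[of b x d m] digits_value_eq_ceiling[of b x d' m]
      nonterm_expansion_remainder[OF b d, of m] nonterm_expansion_remainder[OF b d', of m] b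
    by simp
  then show "d n = d' n"
    using d d' b digits_eq_if_digits_value_eq[of b _ d d' "n - 1"]
    by (cases n) (auto simp: nonterm_expansion_def)
qed

lemma ceiling_mult_nat_bounds:
  fixes y :: real
  assumes "0 < b"
  shows "int b * (\<lceil>y\<rceil> - 1) \<le> \<lceil>real b * y\<rceil> - 1" and "\<lceil>real b * y\<rceil> - 1 < int b * (\<lceil>y\<rceil> - 1) + int b"
proof -
  have "real b * (of_int \<lceil>y\<rceil> - 1) < real b * y"
    using ceiling_correct[of y] assms by (intro mult_strict_left_mono) auto
  moreover have "real b * y \<le> real b * of_int \<lceil>y\<rceil>"
    using ceiling_correct[of y] by (intro mult_left_mono) auto
  moreover have "of_int \<lceil>real b * y\<rceil> - 1 < real b * y" "real b * y \<le> of_int \<lceil>real b * y\<rceil>"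
    using ceiling_correct[of "real b * y"] by auto
  ultimately have "real_of_int (int b * (\<lceil>y\<rceil> - 1)) < real_of_int \<lceil>real b * y\<rceil>"
    and "real_of_int (\<lceil>real b * y\<rceil> - 1) < real_of_int (int b * \<lceil>y\<rceil>)"
    unfolding of_int_mult of_int_diff of_int_of_nat_eq of_int_1 by linarith+
  then show "int b * (\<lceil>y\<rceil> - 1) \<le> \<lceil>real b * y\<rceil> - 1" and "\<lceil>real b * y\<rceil> - 1 < int b * (\<lceil>y\<rceil> - 1) + int b"
    unfolding of_int_less_iff by (simp_all add: algebra_simps)
qed

lemma infinite_nonzero_digits_if_below_limit:
  assumes lim: "(\<lambda>n. digits_value b d n) \<longlonglongrightarrow> x" and below: "\<And>n. digits_value b d n < x"
  shows "infinite {n. d n \<noteq> 0}"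
proof
  assume "finite {n. d n \<noteq> 0}"
  then obtain n0 where "\<forall>n\<in>{n. d n \<noteq> 0}. n < n0"
    unfolding finite_nat_set_iff_bounded by blast
  then have n0: "d n = 0" if "n0 \<le> n" for n
    using that leD by blast
  have "digits_value b d n = digits_value b d n0" if "n0 \<le> n" for n
    using that
  proof (induction n rule: dec_induct)
    case (step n)
    then have "d (Suc n) = 0"
      using n0 by simp
    with step show ?case
      by (simp add: digits_value_Suc)
  qed simp
  then have "\<forall>\<^sub>F n in sequentially. digits_value b d n = digits_value b d n0"
    by (rule eventually_sequentiallyI)
  then have "(\<lambda>n. digits_value b d n) \<longlonglongrightarrow> digits_value b d n0"
    by (rule tendsto_eventually)
  then have "x = digits_value b d n0"
    using lim LIMSEQ_unique by blast
  then show False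
    using below[of n0] by simp
qed

lemma nonterm_expansion_exists:
  assumes b: "b \<ge> 2" and x: "0 < x" "x \<le> 1"
  obtains d where "nonterm_expansion b x d"
proof -
  define A where "A n = \<lceil>x * real b ^ n\<rceil> - 1" for n
  have A_less: "of_int (A n) < x * real b ^ n" and A_ge: "x * real b ^ n \<le> of_int (A n) + 1" for n
    unfolding A_def by linarith+
  have A_Suc: "int b * A n \<le> A (Suc n)" "A (Suc n) < int b * A n + int b" for n
    using ceiling_mult_nat_bounds[where b = b and y = "x * real b ^ n"] b by (simp_all add: A_def algebra_simps)
  define d where "d n = (if n = 0 then 0 else nat (A n - int b * A (n - 1)))" for n
  have d_Suc: "real (d (Suc n)) = of_int (A (Suc n)) - real b * of_int (A n)" for n
    using A_Suc(1)[of n] by (simp add: d_def)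
  have d_less: "d n < b" for n
    using A_Suc(2)[of "n - 1"] b by (cases n) (auto simp: d_def nat_less_iff)
  have truncation: "digits_value b d n = of_int (A n) / real b ^ n" for n
  proof (induction n)
    case 0
    then show ?case
      using x by (simp add: A_def ceiling_eq_iff)
  next
    case (Suc n)
    then show ?case
      using b by (simp add: digits_value_Suc d_Suc field_simps)
  qed
  have below: "digits_value b d n < x" and above: "x \<le> digits_value b d n + 1 / real b ^ n" for n
    using A_less[of n] A_ge[of n] b by (simp_all add: truncation field_simps)
  have lim0: "(\<lambda>n. 1 / real b ^ n) \<longlonglongrightarrow> 0"
    using b by (intro LIMSEQ_divide_realpow_zero) auto
  have bound: "norm (digits_value b d n - x) \<le> 1 / real b ^ n" for n
    using below[of n] above[of n] by simp
  have "(\<lambda>n. digits_value b d n - x) \<longlonglongrightarrow> 0"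
    by (rule Lim_null_comparison[OF always_eventually[OF allI[OF bound]] lim0])
  then have lim: "(\<lambda>n. digits_value b d n) \<longlonglongrightarrow> x"
    by (simp add: LIM_zero_iff)
  then have "nonterm_expansion b x d"
    using infinite_nonzero_digits_if_below_limit[OF lim below] d_less
    unfolding nonterm_expansion_def sums_def digits_value_def by (simp add: d_def)
  then show thesis ..
qed

lemma nonterm_expansion_digit:
  assumes "b \<ge> 2" and "0 < x" and "x \<le> 1"
  shows "nonterm_expansion b x (digit b x)"
proof -
  have "\<exists>!d. nonterm_expansion b x d"
    using nonterm_expansion_exists[OF assms] nonterm_expansion_unique[OF assms(1)] by metis
  then show ?thesis
    unfolding digit_def by (rule theI')
qed

lemma digit_less:
  assumes "b \<ge> 2" and "0 < x" and "x \<le> 1"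
  shows "digit b x n < b"
  using nonterm_expansion_digit[OF assms] unfolding nonterm_expansion_def by auto

definition digit_cylinder :: "nat \<Rightarrow> (nat \<Rightarrow> nat) \<Rightarrow> nat \<Rightarrow> real set" where
  "digit_cylinder b e P = {digits_value b e P<..<digits_value b e P + 1 / real b ^ P}"

lemma digit_cylinder_subset:
  assumes "b \<ge> 2" and "\<forall>i<P. e (Suc i) < b"
  shows "digit_cylinder b e P \<subseteq> {0<..1}"
  using digits_value_diff_le[OF assms, of 0] digits_value_nonneg[of b e P]
  by (auto simp: digit_cylinder_def)

lemma openin_digit_cylinder:
  assumes "b \<ge> 2" and "\<forall>i<P. e (Suc i) < b"
  shows "openin (subtopology euclideanreal {0<..1}) (digit_cylinder b e P)"
  using digit_cylinder_subset[OF assms]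
  by (auto simp: openin_subtopology digit_cylinder_def intro!: exI[of _ "digit_cylinder b e P"])

lemma digit_cylinder_nonempty: "b \<ge> 2 \<Longrightarrow> digit_cylinder b e P \<noteq> {}"
  by (simp add: digit_cylinder_def not_le)

lemma digit_eq_on_digit_cylinder:
  assumes b: "b \<ge> 2" and e: "\<forall>i<P. e (Suc i) < b" and x: "x \<in> digit_cylinder b e P" and "i < P"
  shows "digit b x (Suc i) = e (Suc i)"
proof (rule digits_eq_if_digits_value_eq[of b P])
  have x01: "0 < x" "x \<le> 1"
    using digit_cylinder_subset[OF b e] x by auto
  fix m assume "m \<le> P"
  have "digits_value b e m \<le> digits_value b e P"
    using \<open>m \<le> P\<close> by (rule digits_value_mono)
  moreover have "digits_value b e P - digits_value b e m \<le> 1 / real b ^ m - 1 / real b ^ P"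
    using digits_value_diff_le[OF b e \<open>m \<le> P\<close>] .
  ultimately have "digits_value b e m = of_int (\<lceil>x * real b ^ m\<rceil> - 1) / real b ^ m"
    using x b by (intro digits_value_eq_ceiling) (auto simp: digit_cylinder_def)
  moreover have "digits_value b (digit b x) m = of_int (\<lceil>x * real b ^ m\<rceil> - 1) / real b ^ m"
    using nonterm_expansion_remainder[OF b nonterm_expansion_digit[OF b x01]] b
    by (intro digits_value_eq_ceiling) auto
  ultimately show "digits_value b (digit b x) m = digits_value b e m"
    by simp
qed (use b \<open>i < P\<close> in auto)

lemma dist_less_if_digits_eq:
  assumes b: "b \<ge> 2" and x: "0 < x" "x \<le> 1" and y: "0 < y" "y \<le> 1"
    and digits: "\<forall>i<P. digit b x (Suc i) = digit b y (Suc i)"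
  shows "\<bar>x - y\<bar> < 1 / real b ^ P"
proof -
  have "digits_value b (digit b x) P = digits_value b (digit b y) P"
    unfolding digits_value_def using digits by (intro sum.cong) auto
  then show ?thesis
    using nonterm_expansion_remainder[OF b nonterm_expansion_digit[OF b x], of P]
      nonterm_expansion_remainder[OF b nonterm_expansion_digit[OF b y], of P]
    by linarith
qed

section \<open>Cyclic words\<close>

lemma sum_lessThan_add:
  fixes m n :: nat
  shows "(\<Sum>i<m + n. f i) = (\<Sum>i<m. f i) + (\<Sum>i<n. f (m + i))"
  by (induction n) (simp_all add: add.assoc)

lemma sum_lessThan_mod:
  fixes F :: "nat \<Rightarrow> 'a::comm_semiring_1"
  shows "(\<Sum>t<m. F (t mod L)) = of_nat (m div L) * (\<Sum>t<L. F t) + (\<Sum>t<m mod L. F t)"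
proof -
  have "(\<Sum>t<q * L. F (t mod L)) = of_nat q * (\<Sum>t<L. F t)" for q
  proof (induction q)
    case (Suc q)
    have "(\<Sum>t<Suc q * L. F (t mod L)) = (\<Sum>t<q * L. F (t mod L)) + (\<Sum>t<L. F ((q * L + t) mod L))"
      using sum_lessThan_add[of "\<lambda>t. F (t mod L)" "q * L" L] by (simp add: add.commute)
    also have "(\<Sum>t<L. F ((q * L + t) mod L)) = (\<Sum>t<L. F t)"
      by (intro sum.cong) auto
    finally show ?case
      using Suc by (simp add: algebra_simps)
  qed simp
  moreover have "(m div L * L + t) mod L = t" if "t < m mod L" for t
  proof (cases "L = 0")
    case False
    then have "t < L"
      using that mod_less_divisor[of L m] by linarith
    then show ?thesis
      by (simp add: mod_mult_self3)
  qed simp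
  then have "(\<Sum>t<m mod L. F ((m div L * L + t) mod L)) = (\<Sum>t<m mod L. F t)"
    by (intro sum.cong) auto
  ultimately show ?thesis
    using sum_lessThan_add[of "\<lambda>t. F (t mod L)" "m div L * L" "m mod L"] by simp
qed

definition cyclic_window :: "nat list \<Rightarrow> nat \<Rightarrow> nat \<Rightarrow> nat list" where
  "cyclic_window w k t = map (\<lambda>j. w ! ((t + j) mod length w)) [0..<k]"

definition cyclic_count :: "nat list \<Rightarrow> nat list \<Rightarrow> real" where
  "cyclic_count w s = (\<Sum>t<length w. if cyclic_window w (length s) t = s then 1 else 0)"

definition repeat_word :: "nat \<Rightarrow> nat list \<Rightarrow> nat list" where
  "repeat_word m u = map (\<lambda>p. u ! (p mod length u)) [0..<m * length u]"

lemma length_cyclic_window [simp]: "length (cyclic_window w k t) = k"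
  by (simp add: cyclic_window_def)

lemma nth_cyclic_window: "j < k \<Longrightarrow> cyclic_window w k t ! j = w ! ((t + j) mod length w)"
  by (simp add: cyclic_window_def)

lemma cyclic_window_mod: "cyclic_window w k (t mod length w) = cyclic_window w k t"
  unfolding cyclic_window_def by (intro map_cong) (auto simp: mod_add_left_eq)

lemma cyclic_window_Suc_snoc:
  "cyclic_window w (Suc k) t = cyclic_window w k t @ [w ! ((t + k) mod length w)]"
  by (simp add: cyclic_window_def)

lemma cyclic_window_Suc_Cons:
  "cyclic_window w (Suc k) t = w ! (t mod length w) # cyclic_window w k (Suc t)"
  unfolding cyclic_window_def by (simp add: upt_conv_Cons map_Suc_upt[symmetric] del: upt_Suc)

lemma finite_strings: "finite (strings b k)"
proof -
  have "strings b k = {xs. set xs \<subseteq> {..<b} \<and> length xs = k}"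
    unfolding strings_def by auto
  then show ?thesis
    using finite_lists_length_eq[of "{..<b}" k] by simp
qed

lemma cyclic_window_in_strings:
  assumes "w \<noteq> []" and "set w \<subseteq> {..<b}"
  shows "cyclic_window w k t \<in> strings b k"
proof -
  have "w ! ((t + j) mod length w) \<in> set w" for j
    using assms(1) by simp
  then show ?thesis
    using assms(2) unfolding strings_def cyclic_window_def by auto
qed

lemma cyclic_count_nonneg: "0 \<le> cyclic_count w s"
  unfolding cyclic_count_def by (auto intro: sum_nonneg)

lemma cyclic_count_le_length: "cyclic_count w s \<le> real (length w)"
proof -
  have "cyclic_count w s \<le> (\<Sum>t<length w. 1)"
    unfolding cyclic_count_def by (intro sum_mono) auto
  then show ?thesis by simp
qed

lemma cyclic_count_pos_iff:
  "0 < cyclic_count w s \<longleftrightarrow> (\<exists>t<length w. cyclic_window w (length s) t = s)"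
proof
  assume pos: "0 < cyclic_count w s"
  show "\<exists>t<length w. cyclic_window w (length s) t = s"
  proof (rule ccontr)
    assume "\<not> ?thesis"
    then have "cyclic_count w s = 0"
      unfolding cyclic_count_def by (intro sum.neutral) auto
    with pos show False by simp
  qed
next
  assume "\<exists>t<length w. cyclic_window w (length s) t = s"
  then obtain t where "t < length w" "cyclic_window w (length s) t = s"
    by blast
  then have "1 \<le> cyclic_count w s"
    unfolding cyclic_count_def
    using member_le_sum[of t "{..<length w}" "\<lambda>t. if cyclic_window w (length s) t = s then 1 else (0::real)"]
    by auto
  then show "0 < cyclic_count w s" by simp
qed

lemma sum_cyclic_count_strings:
  assumes "w \<noteq> []" and "set w \<subseteq> {..<b}"
  shows "(\<Sum>s\<in>strings b k. cyclic_count w s) = real (length w)"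
proof -
  have "(\<Sum>s\<in>strings b k. cyclic_count w s) =
      (\<Sum>s\<in>strings b k. \<Sum>t<length w. if cyclic_window w k t = s then 1 else 0)"
    unfolding cyclic_count_def by (intro sum.cong) (auto simp: strings_def)
  also have "\<dots> = (\<Sum>t<length w. \<Sum>s\<in>strings b k. if cyclic_window w k t = s then 1 else 0)"
    by (rule sum.swap)
  also have "\<dots> = (\<Sum>t<length w. 1)"
    using cyclic_window_in_strings[OF assms] finite_strings by (intro sum.cong) auto
  finally show ?thesis by simp
qed

lemma sum_cyclic_count_snoc:
  assumes "w \<noteq> []" and "set w \<subseteq> {..<b}"
  shows "(\<Sum>c<b. cyclic_count w (s @ [c])) = cyclic_count w s"
proof -
  let ?L = "length w"
  have letter: "w ! i < b" if "i < ?L" for i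
    using assms(2) nth_mem[OF that] by auto
  have "(t + length s) mod ?L < ?L" for t
    using assms(1) by simp
  note letter = letter[OF this]
  have "(\<Sum>c<b. cyclic_count w (s @ [c])) = (\<Sum>c<b. \<Sum>t<?L.
      if cyclic_window w (length s) t = s \<and> w ! ((t + length s) mod ?L) = c then 1 else 0)"
    unfolding cyclic_count_def by (intro sum.cong refl) (auto simp: cyclic_window_Suc_snoc)
  also have "\<dots> = (\<Sum>t<?L. \<Sum>c<b.
      if cyclic_window w (length s) t = s \<and> w ! ((t + length s) mod ?L) = c then 1 else 0)"
    by (rule sum.swap)
  also have "\<dots> = (\<Sum>t<?L. if cyclic_window w (length s) t = s then 1 else 0)"
    using letter by (intro sum.cong refl) auto
  finally show ?thesis
    unfolding cyclic_count_def .
qed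

lemma sum_cyclic_count_Cons:
  assumes "w \<noteq> []" and "set w \<subseteq> {..<b}"
  shows "(\<Sum>c<b. cyclic_count w (c # s)) = cyclic_count w s"
proof -
  let ?L = "length w" and ?F = "\<lambda>t. if cyclic_window w (length s) t = s then 1 else (0::real)"
  have letter: "w ! i < b" if "i < ?L" for i
    using assms(2) nth_mem[OF that] by auto
  have "(\<Sum>c<b. cyclic_count w (c # s)) = (\<Sum>c<b. \<Sum>t<?L.
      if w ! (t mod ?L) = c \<and> cyclic_window w (length s) (Suc t) = s then 1 else 0)"
    unfolding cyclic_count_def by (intro sum.cong refl) (auto simp: cyclic_window_Suc_Cons)
  also have "\<dots> = (\<Sum>t<?L. \<Sum>c<b.
      if w ! (t mod ?L) = c \<and> cyclic_window w (length s) (Suc t) = s then 1 else 0)"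
    by (rule sum.swap)
  also have "\<dots> = (\<Sum>t<?L. ?F (Suc t))"
    using letter by (intro sum.cong refl) auto
  also have "\<dots> = (\<Sum>t<?L. ?F t)"
  proof -
    have "?F ?L = ?F 0"
      using cyclic_window_mod[of w "length s" ?L] by simp
    then show ?thesis
      using sum.lessThan_Suc_shift[of ?F ?L] by simp
  qed
  finally show ?thesis
    unfolding cyclic_count_def .
qed

lemma length_repeat_word [simp]: "length (repeat_word m u) = m * length u"
  by (simp add: repeat_word_def)

lemma set_repeat_word: "set (repeat_word m u) \<subseteq> set u"
proof
  fix c assume "c \<in> set (repeat_word m u)"
  then obtain p where "p < m * length u" and c: "c = u ! (p mod length u)"
    unfolding repeat_word_def by auto
  then have "p mod length u < length u"
    by (cases "length u") auto
  then show "c \<in> set u"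
    using c by simp
qed

lemma cyclic_count_repeat_word:
  assumes "u \<noteq> []"
  shows "cyclic_count (repeat_word m u) s = real m * cyclic_count u s"
proof -
  let ?L = "length u"
  have "cyclic_window (repeat_word m u) (length s) t = cyclic_window u (length s) (t mod ?L)"
    if "t < m * ?L" for t
  proof (rule nth_equalityI)
    fix j assume "j < length (cyclic_window (repeat_word m u) (length s) t)"
    then have j: "j < length s" by simp
    have "m * ?L > 0" using that by linarith
    then have "cyclic_window (repeat_word m u) (length s) t ! j = u ! ((t + j) mod (m * ?L) mod ?L)"
      using j by (simp add: nth_cyclic_window repeat_word_def)
    also have "\<dots> = cyclic_window u (length s) (t mod ?L) ! j"
      using j by (simp add: nth_cyclic_window mod_mod_cancel mod_add_left_eq)
    finally show "cyclic_window (repeat_word m u) (length s) t ! j = cyclic_window u (length s) (t mod ?L) ! j" .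
  qed simp
  then have "cyclic_count (repeat_word m u) s =
      (\<Sum>t<m * ?L. (\<lambda>t'. if cyclic_window u (length s) t' = s then 1 else 0) (t mod ?L))"
    unfolding cyclic_count_def by (intro sum.cong) auto
  also have "\<dots> = real m * cyclic_count u s"
    using sum_lessThan_mod[where F = "\<lambda>t'. if cyclic_window u (length s) t' = s then 1 else (0::real)"
        and m = "m * ?L" and L = ?L]
      assms unfolding cyclic_count_def by simp
  finally show ?thesis .
qed

lemma cyclic_window_append_left:
  "t + k \<le> length u \<Longrightarrow> cyclic_window (u @ v) k t = cyclic_window u k t"
  by (intro nth_equalityI) (simp_all add: nth_cyclic_window nth_append)

lemma cyclic_window_append_right:
  "t + k \<le> length v \<Longrightarrow> cyclic_window (u @ v) k (length u + t) = cyclic_window v k t"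
  by (intro nth_equalityI) (simp_all add: nth_cyclic_window nth_append add.assoc)

lemma abs_sum_diff_le_if_eq_on_prefix:
  fixes f g :: "nat \<Rightarrow> real"
  assumes "\<And>t. t + k \<le> n \<Longrightarrow> f t = g t" and "\<And>t. \<bar>f t - g t\<bar> \<le> 1"
  shows "\<bar>(\<Sum>t<n. f t) - (\<Sum>t<n. g t)\<bar> \<le> real k"
proof -
  have "\<bar>(\<Sum>t<n. f t) - (\<Sum>t<n. g t)\<bar> \<le> (\<Sum>t<n. \<bar>f t - g t\<bar>)"
    by (simp add: sum_subtractf[symmetric] sum_abs)
  also have "\<dots> \<le> (\<Sum>t\<in>{n - k..<n}. 1)"
  proof -
    have "(\<Sum>t<n. \<bar>f t - g t\<bar>) = (\<Sum>t\<in>{n - k..<n}. \<bar>f t - g t\<bar>)"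
      using assms(1) by (intro sum.mono_neutral_right) auto
    also have "\<dots> \<le> (\<Sum>t\<in>{n - k..<n}. 1)"
      by (rule sum_mono) (rule assms(2))
    finally show ?thesis .
  qed
  finally show ?thesis
    by (cases "k \<le> n") (simp_all add: of_nat_diff)
qed

text \<open>Only occurrences that wrap around one of the two junctions are miscounted.\<close>

lemma cyclic_count_append: "\<bar>cyclic_count (u @ v) s - cyclic_count u s - cyclic_count v s\<bar> \<le> 2 * real (length s)"
proof -
  let ?k = "length s"
  define G where "G t = (if cyclic_window (u @ v) ?k t = s then 1 else (0::real))" for t
  have "cyclic_count (u @ v) s = (\<Sum>t<length u. G t) + (\<Sum>t<length v. G (length u + t))"
    unfolding cyclic_count_def G_def by (simp add: sum_lessThan_add)
  moreover have "\<bar>(\<Sum>t<length u. G t) - cyclic_count u s\<bar> \<le> real ?k"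
    unfolding cyclic_count_def G_def
    by (rule abs_sum_diff_le_if_eq_on_prefix) (auto simp: cyclic_window_append_left)
  moreover have "\<bar>(\<Sum>t<length v. G (length u + t)) - cyclic_count v s\<bar> \<le> real ?k"
    unfolding cyclic_count_def G_def
    by (rule abs_sum_diff_le_if_eq_on_prefix) (auto simp: cyclic_window_append_right)
  ultimately show ?thesis by linarith
qed

section \<open>Circulations on de Bruijn graphs\<close>

text \<open>A nonnegative circulation on the de Bruijn graph whose vertices are the strings of
  length \<open>k - 1\<close> and whose edges are the strings of length \<open>k\<close>.\<close>

definition de_bruijn_circulation :: "nat \<Rightarrow> nat \<Rightarrow> (nat list \<Rightarrow> real) \<Rightarrow> bool" where
  "de_bruijn_circulation b k p \<longleftrightarrow> (\<forall>s\<in>strings b k. 0 \<le> p s) \<and>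
     (\<forall>s\<in>strings b (k - 1). (\<Sum>c<b. p (c # s)) = (\<Sum>c<b. p (s @ [c])))"

lemma Delta_imp_de_bruijn_circulation: "p \<in> Delta b k \<Longrightarrow> de_bruijn_circulation b k p"
  by (simp add: Delta_def de_bruijn_circulation_def)

lemma de_bruijn_circulation_cyclic_count:
  assumes "w \<noteq> []" and "set w \<subseteq> {..<b}"
  shows "de_bruijn_circulation b k (cyclic_count w)"
  using sum_cyclic_count_Cons[OF assms] sum_cyclic_count_snoc[OF assms]
  by (simp add: de_bruijn_circulation_def cyclic_count_nonneg)

lemma de_bruijn_circulation_successor:
  assumes p: "de_bruijn_circulation b k p" and "k \<ge> 1" and s: "s \<in> strings b k" "0 < p s"
  obtains c where "c < b" and "0 < p (tl s @ [c])"
proof -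
  obtain h t where hs: "s = h # t"
    using s(1) \<open>k \<ge> 1\<close> by (cases s) (auto simp: strings_def)
  then have t: "t \<in> strings b (k - 1)" and h: "h < b"
    using s(1) by (auto simp: strings_def)
  have "c # t \<in> strings b k" if "c < b" for c
    using that t \<open>k \<ge> 1\<close> by (auto simp: strings_def)
  then have "p (h # t) \<le> (\<Sum>c<b. p (c # t))"
    using p h by (intro member_le_sum) (auto simp: de_bruijn_circulation_def)
  then have "0 < (\<Sum>c<b. p (t @ [c]))"
    using p t s(2) hs by (simp add: de_bruijn_circulation_def)
  then obtain c where "c < b" "0 < p (t @ [c])"
    by (metis (no_types, lifting) lessThan_iff not_less sum_nonpos)
  then show ?thesis
    using that hs by simp
qed

lemma funpow_eventually_periodic:
  assumes "finite S" and "f ` S \<subseteq> S" and "x \<in> S"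
  obtains i L where "0 < L" and "\<And>m. (f ^^ (i + m)) x = (f ^^ (i + m mod L)) x"
proof -
  have "(f ^^ n) x \<in> S" for n
    using assms(2,3) by (induction n) auto
  then have "\<not> inj (\<lambda>n. (f ^^ n) x)"
    using assms(1) infinite_iff_countable_subset[of S] by (metis finite_subset image_subset_iff range_inj_infinite)
  then obtain i j where "i < j" and ij: "(f ^^ i) x = (f ^^ j) x"
    unfolding inj_def by (metis linorder_neqE_nat)
  define L where "L = j - i"
  have shift: "(f ^^ (i + m)) x = (f ^^ m) ((f ^^ i) x)" for m
    by (metis add.commute comp_apply funpow_add)
  have "(f ^^ (i + q * L + r)) x = (f ^^ (i + r)) x" for q r
  proof (induction q)
    case (Suc q)
    have "i + Suc q * L + r = (q * L + r) + j"
      using \<open>i < j\<close> by (simp add: L_def)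
    then have "(f ^^ (i + Suc q * L + r)) x = (f ^^ (q * L + r)) ((f ^^ j) x)"
      by (simp only: funpow_add comp_apply)
    also have "\<dots> = (f ^^ (i + q * L + r)) x"
      using ij shift[of "q * L + r"] by (simp add: add.assoc)
    finally show ?case
      using Suc by simp
  qed simp
  then have "(f ^^ (i + m)) x = (f ^^ (i + m mod L)) x" for m
    using div_mult_mod_eq[of m L] by (metis add.assoc)
  moreover have "0 < L"
    using \<open>i < j\<close> by (simp add: L_def)
  ultimately show thesis
    using that by blast
qed

text \<open>Following successors from \<open>s0\<close> eventually runs into a cycle, which spells out the word.\<close>

lemma shift_closed_contains_cyclic_word:
  assumes "finite G" and len: "\<And>s. s \<in> G \<Longrightarrow> length s = k" and "k \<ge> 1" and "s0 \<in> G"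
    and succ: "\<And>s. s \<in> G \<Longrightarrow> \<exists>c. tl s @ [c] \<in> G"
  obtains w where "w \<noteq> []" and "\<And>t. t < length w \<Longrightarrow> cyclic_window w k t \<in> G"
proof -
  define f where "f s = (SOME s'. \<exists>c. s' = tl s @ [c] \<and> s' \<in> G)" for s
  have f: "f s \<in> G \<and> (\<exists>c. f s = tl s @ [c])" if "s \<in> G" for s
    using someI_ex[of "\<lambda>s'. \<exists>c. s' = tl s @ [c] \<and> s' \<in> G"] succ[OF that] by (auto simp: f_def)
  then have fG: "f ` G \<subseteq> G"
    by blast
  obtain i L where "0 < L" and per: "\<And>m. (f ^^ (i + m)) s0 = (f ^^ (i + m mod L)) s0"
    by (rule funpow_eventually_periodic[OF \<open>finite G\<close> fG \<open>s0 \<in> G\<close>]) blast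
  define seq where "seq n = (f ^^ n) s0" for n
  have seq: "seq n \<in> G" for n
    using \<open>s0 \<in> G\<close> f by (induction n) (auto simp: seq_def)
  have seq_nth: "seq n ! t = seq (n + t) ! 0" if "t < k" for n t
    using that
  proof (induction t arbitrary: n)
    case (Suc t)
    obtain c where "seq (Suc n) = tl (seq n) @ [c]"
      using f[OF seq[of n]] by (auto simp: seq_def)
    moreover have "t < length (tl (seq n))"
      using Suc.prems len[OF seq[of n]] by simp
    ultimately have "seq n ! Suc t = seq (Suc n) ! t"
      by (simp add: nth_append nth_tl)
    then show ?case
      using Suc by simp
  qed simp
  define w where "w = map (\<lambda>t. seq (i + t) ! 0) [0..<L]"
  have "cyclic_window w k t = seq (i + t)" if "t < L" for t
  proof (rule nth_equalityI)
    show "length (cyclic_window w k t) = length (seq (i + t))"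
      using len[OF seq] by simp
    fix j assume "j < length (cyclic_window w k t)"
    then have "j < k" by simp
    have "cyclic_window w k t ! j = seq (i + (t + j) mod L) ! 0"
      using \<open>j < k\<close> \<open>0 < L\<close> by (simp add: nth_cyclic_window w_def)
    also have "\<dots> = seq (i + t) ! j"
      using per[of "t + j"] seq_nth[OF \<open>j < k\<close>, of "i + t"] by (simp add: seq_def add.assoc)
    finally show "cyclic_window w k t ! j = seq (i + t) ! j" .
  qed
  then show thesis
    using that[of w] \<open>0 < L\<close> seq by (simp add: w_def)
qed

lemma de_bruijn_circulation_cyclic_word:
  assumes p: "de_bruijn_circulation b k p" and "k \<ge> 1" and s0: "s0 \<in> strings b k" "0 < p s0"
  obtains w where "w \<noteq> []" and "set w \<subseteq> {..<b}"
    and "\<And>t. t < length w \<Longrightarrow> 0 < p (cyclic_window w k t)"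
proof -
  let ?G = "{s \<in> strings b k. 0 < p s}"
  have succ: "\<exists>c. tl s @ [c] \<in> ?G" if s: "s \<in> ?G" for s
  proof -
    obtain c where "c < b" "0 < p (tl s @ [c])"
      by (rule de_bruijn_circulation_successor[OF p \<open>k \<ge> 1\<close>]) (use s in auto)
    moreover have "tl s @ [c] \<in> strings b k"
      using s \<open>c < b\<close> \<open>k \<ge> 1\<close> by (cases s) (auto simp: strings_def)
    ultimately show ?thesis
      by blast
  qed
  have "finite ?G"
    using finite_strings by simp
  obtain w where "w \<noteq> []" and win: "\<And>t. t < length w \<Longrightarrow> cyclic_window w k t \<in> ?G"
    by (rule shift_closed_contains_cyclic_word[OF \<open>finite ?G\<close> _ \<open>k \<ge> 1\<close> _ succ])
      (use s0 in \<open>auto simp: strings_def\<close>)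
  have "w ! t < b" if "t < length w" for t
  proof -
    have "cyclic_window w k t ! 0 = w ! t"
      using \<open>k \<ge> 1\<close> that by (simp add: nth_cyclic_window)
    moreover have "cyclic_window w k t ! 0 \<in> set (cyclic_window w k t)"
      using \<open>k \<ge> 1\<close> by (intro nth_mem) simp
    ultimately show ?thesis
      using win[OF that] by (auto simp: strings_def)
  qed
  then have "set w \<subseteq> {..<b}"
    by (auto simp: in_set_conv_nth)
  then show thesis
    using that \<open>w \<noteq> []\<close> win by blast
qed

lemma de_bruijn_circulation_diff:
  assumes p: "de_bruijn_circulation b k p" and q: "de_bruijn_circulation b k q"
    and le: "\<And>s. s \<in> strings b k \<Longrightarrow> \<mu> * q s \<le> p s"
  shows "de_bruijn_circulation b k (\<lambda>s. p s - \<mu> * q s)"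
  using assms unfolding de_bruijn_circulation_def
  by (simp add: sum_subtractf sum_distrib_left[symmetric])

lemma ex_max_scaling_le:
  fixes p q :: "'a \<Rightarrow> real"
  assumes "finite S" and "S \<noteq> {}" and q: "\<And>s. s \<in> S \<Longrightarrow> 0 < q s"
  obtains s1 where "s1 \<in> S" and "\<And>s. s \<in> S \<Longrightarrow> p s1 / q s1 * q s \<le> p s"
proof -
  have "Min ((\<lambda>s. p s / q s) ` S) \<in> (\<lambda>s. p s / q s) ` S"
    using assms(1,2) by (intro Min_in) auto
  then obtain s1 where s1: "s1 \<in> S" "Min ((\<lambda>s. p s / q s) ` S) = p s1 / q s1"
    by blast
  have "p s1 / q s1 * q s \<le> p s" if "s \<in> S" for s
  proof -
    have "p s1 / q s1 \<le> p s / q s"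
      unfolding s1(2)[symmetric] using assms(1) that by (intro Min_le) auto
    then show ?thesis
      using q[OF that] by (simp add: pos_le_divide_eq)
  qed
  then show thesis
    using that s1(1) by blast
qed

text \<open>Peeling off the largest multiple of a cycle that keeps the circulation nonnegative
  empties at least one edge.\<close>

lemma de_bruijn_circulation_subtract_cycle:
  assumes p: "de_bruijn_circulation b k p" and "k \<ge> 1" and s0: "s0 \<in> strings b k" "p s0 \<noteq> 0"
  obtains \<mu> w where "0 < \<mu>" and "w \<noteq> []" and "set w \<subseteq> {..<b}"
    and "de_bruijn_circulation b k (\<lambda>s. p s - \<mu> * cyclic_count w s)"
    and "{s \<in> strings b k. p s - \<mu> * cyclic_count w s \<noteq> 0} \<subset> {s \<in> strings b k. p s \<noteq> 0}"
proof -
  have "0 < p s0"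
    using p s0 by (auto simp: de_bruijn_circulation_def less_le)
  obtain w where w: "w \<noteq> []" "set w \<subseteq> {..<b}"
    and win: "\<And>t. t < length w \<Longrightarrow> 0 < p (cyclic_window w k t)"
    by (rule de_bruijn_circulation_cyclic_word[OF p \<open>k \<ge> 1\<close> s0(1) \<open>0 < p s0\<close>]) blast
  define S where "S = {s \<in> strings b k. 0 < cyclic_count w s}"
  have S_pos: "0 < p s" if "s \<in> S" for s
  proof -
    have "length s = k"
      using that by (simp add: S_def strings_def)
    moreover have "\<exists>t<length w. cyclic_window w (length s) t = s"
      using that by (simp add: S_def cyclic_count_pos_iff)
    ultimately obtain t where "t < length w" "cyclic_window w k t = s"
      by blast
    then show ?thesis
      using win by blast
  qed
  have zero_outside: "cyclic_count w s = 0" if "s \<notin> S" "s \<in> strings b k" for s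
    using that cyclic_count_nonneg[of w s] by (simp add: S_def)
  have "cyclic_window w k 0 \<in> S"
    using w cyclic_window_in_strings[OF w] unfolding S_def cyclic_count_pos_iff by auto
  then have "S \<noteq> {}"
    by blast
  have "finite S"
    using finite_strings by (simp add: S_def)
  then obtain s1 where "s1 \<in> S" and s1: "\<And>s. s \<in> S \<Longrightarrow> p s1 / cyclic_count w s1 * cyclic_count w s \<le> p s"
    by (rule ex_max_scaling_le[where p = p and q = "cyclic_count w", OF _ \<open>S \<noteq> {}\<close>]) (auto simp: S_def)
  define \<mu> where "\<mu> = p s1 / cyclic_count w s1"
  have "0 < \<mu>"
    using \<open>s1 \<in> S\<close> S_pos[OF \<open>s1 \<in> S\<close>] by (simp add: \<mu>_def S_def)
  have le: "\<mu> * cyclic_count w s \<le> p s" if "s \<in> strings b k" for s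
    using s1 zero_outside that p by (cases "s \<in> S") (auto simp: \<mu>_def de_bruijn_circulation_def)
  have "{s \<in> strings b k. p s - \<mu> * cyclic_count w s \<noteq> 0} \<subset> {s \<in> strings b k. p s \<noteq> 0}"
  proof
    show "{s \<in> strings b k. p s - \<mu> * cyclic_count w s \<noteq> 0} \<subseteq> {s \<in> strings b k. p s \<noteq> 0}"
      using S_pos zero_outside by force
    have "p s1 - \<mu> * cyclic_count w s1 = 0" "p s1 \<noteq> 0" "s1 \<in> strings b k"
      using \<open>s1 \<in> S\<close> S_pos[OF \<open>s1 \<in> S\<close>] by (simp_all add: \<mu>_def S_def)
    then show "{s \<in> strings b k. p s - \<mu> * cyclic_count w s \<noteq> 0} \<noteq> {s \<in> strings b k. p s \<noteq> 0}"
      by blast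
  qed
  with de_bruijn_circulation_diff[OF p de_bruijn_circulation_cyclic_count[OF w] le] show thesis
    using that[OF \<open>0 < \<mu>\<close> w] by blast
qed

lemma de_bruijn_circulation_decomposition:
  assumes "de_bruijn_circulation b k p" and "k \<ge> 1"
  shows "\<exists>(R::nat) lam ws. (\<forall>r<R. 0 \<le> lam r \<and> ws r \<noteq> [] \<and> set (ws r) \<subseteq> {..<b}) \<and>
    (\<forall>s\<in>strings b k. p s = (\<Sum>r<R. lam r * cyclic_count (ws r) s))"
  using assms(1)
proof (induction "card {s \<in> strings b k. p s \<noteq> 0}" arbitrary: p rule: less_induct)
  case less
  show ?case
  proof (cases "\<exists>s0\<in>strings b k. p s0 \<noteq> 0")
    case False
    show ?thesis
      by (intro exI[of _ "0::nat"] exI[of _ "\<lambda>_. 0"] exI[of _ "\<lambda>_. []"]) (use False in auto)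
  next
    case True
    then obtain s0 where s0: "s0 \<in> strings b k" "p s0 \<noteq> 0" ..
    obtain \<mu> w where \<mu>: "0 < \<mu>" and w: "w \<noteq> []" "set w \<subseteq> {..<b}"
      and circ: "de_bruijn_circulation b k (\<lambda>s. p s - \<mu> * cyclic_count w s)"
      and supp: "{s \<in> strings b k. p s - \<mu> * cyclic_count w s \<noteq> 0} \<subset> {s \<in> strings b k. p s \<noteq> 0}"
      by (rule de_bruijn_circulation_subtract_cycle[OF less.prems \<open>k \<ge> 1\<close> s0]) blast
    have "card {s \<in> strings b k. p s - \<mu> * cyclic_count w s \<noteq> 0} < card {s \<in> strings b k. p s \<noteq> 0}"
      using supp finite_strings by (intro psubset_card_mono) auto
    then have "\<exists>(R::nat) lam ws. (\<forall>r<R. 0 \<le> lam r \<and> ws r \<noteq> [] \<and> set (ws r) \<subseteq> {..<b}) \<and>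
        (\<forall>s\<in>strings b k. p s - \<mu> * cyclic_count w s = (\<Sum>r<R. lam r * cyclic_count (ws r) s))"
      using circ by (rule less.hyps)
    then show ?thesis
    proof (elim exE conjE)
      fix R :: nat and lam ws
      assume R: "\<forall>r<R. 0 \<le> lam r \<and> ws r \<noteq> [] \<and> set (ws r) \<subseteq> {..<b}"
        and eq: "\<forall>s\<in>strings b k. p s - \<mu> * cyclic_count w s = (\<Sum>r<R. lam r * cyclic_count (ws r) s)"
      show ?thesis
      proof (intro exI conjI)
        show "\<forall>r<Suc R. 0 \<le> (lam(R := \<mu>)) r \<and> (ws(R := w)) r \<noteq> [] \<and> set ((ws(R := w)) r) \<subseteq> {..<b}"
          using R \<mu> w by (auto simp: less_Suc_eq)
        show "\<forall>s\<in>strings b k. p s = (\<Sum>r<Suc R. (lam(R := \<mu>)) r * cyclic_count ((ws(R := w)) r) s)"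
          using eq by (simp add: algebra_simps)
      qed
    qed
  qed
qed

section \<open>Approximation by cyclic words\<close>

lemma length_concat_repeat_words:
  "length (concat (map (\<lambda>r. repeat_word (m r) (ws r)) [0..<R])) = (\<Sum>r<R. m r * length (ws r))"
  by (induction R) simp_all

lemma cyclic_count_concat_repeat_words:
  assumes "\<And>r. r < R \<Longrightarrow> ws r \<noteq> []"
  shows "\<bar>cyclic_count (concat (map (\<lambda>r. repeat_word (m r) (ws r)) [0..<R])) s -
      (\<Sum>r<R. real (m r) * cyclic_count (ws r) s)\<bar> \<le> 2 * real (length s) * real R"
  using assms
proof (induction R)
  case (Suc R)
  let ?W = "concat (map (\<lambda>r. repeat_word (m r) (ws r)) [0..<R])"
  have "\<bar>cyclic_count (?W @ repeat_word (m R) (ws R)) s - cyclic_count ?W s -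
      real (m R) * cyclic_count (ws R) s\<bar> \<le> 2 * real (length s)"
    using cyclic_count_append[of ?W "repeat_word (m R) (ws R)" s]
      cyclic_count_repeat_word[of "ws R" "m R" s] Suc.prems by simp
  moreover have "\<bar>cyclic_count ?W s - (\<Sum>r<R. real (m r) * cyclic_count (ws r) s)\<bar> \<le> 2 * real (length s) * real R"
    using Suc by simp
  ultimately show ?case
    by (simp add: algebra_simps)
qed (simp add: cyclic_count_def)

lemma abs_sum_floor_scaled_diff_le:
  fixes lam a :: "nat \<Rightarrow> real"
  assumes "\<And>r. r < R \<Longrightarrow> 0 \<le> lam r" and "\<And>r. r < R \<Longrightarrow> 0 \<le> a r" and "0 \<le> M"
  shows "\<bar>(\<Sum>r<R. real (nat \<lfloor>lam r * M\<rfloor>) * a r) - M * (\<Sum>r<R. lam r * a r)\<bar> \<le> (\<Sum>r<R. a r)"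
proof -
  have "\<bar>real (nat \<lfloor>lam r * M\<rfloor>) * a r - M * (lam r * a r)\<bar> \<le> a r" if "r < R" for r
  proof -
    have "0 \<le> lam r * M"
      using assms(1)[OF that] assms(3) by simp
    then have "\<bar>real (nat \<lfloor>lam r * M\<rfloor>) - lam r * M\<bar> \<le> 1"
      by linarith
    then have "\<bar>real (nat \<lfloor>lam r * M\<rfloor>) - lam r * M\<bar> * a r \<le> a r"
      using assms(2)[OF that] by (simp add: mult_left_le_one_le)
    moreover have "real (nat \<lfloor>lam r * M\<rfloor>) * a r - M * (lam r * a r) =
        (real (nat \<lfloor>lam r * M\<rfloor>) - lam r * M) * a r"
      by (simp add: algebra_simps)
    ultimately show ?thesis
      using assms(2)[OF that] by (simp add: abs_mult)
  qed
  then have "(\<Sum>r<R. \<bar>real (nat \<lfloor>lam r * M\<rfloor>) * a r - M * (lam r * a r)\<bar>) \<le> (\<Sum>r<R. a r)"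
    by (intro sum_mono) simp
  then show ?thesis
    by (simp add: sum_distrib_left sum_subtractf[symmetric] order_trans[OF sum_abs])
qed

lemma abs_divide_diff_le:
  fixes X Y M \<eta> C D :: real
  assumes "\<bar>X - M * \<eta>\<bar> \<le> D" and "\<bar>Y - M\<bar> \<le> C" and "0 \<le> \<eta>" and "\<eta> \<le> 1" and "C < M"
  shows "\<bar>X / Y - \<eta>\<bar> \<le> (D + C) / (M - C)"
proof -
  have Y: "M - C \<le> Y" "0 < Y"
    using assms(2,5) by linarith+
  have "\<eta> * \<bar>M - Y\<bar> \<le> C"
    using assms(2-4) mult_mono[of \<eta> 1 "\<bar>M - Y\<bar>" C] by (simp add: abs_minus_commute)
  moreover have "\<bar>X - \<eta> * Y\<bar> \<le> \<bar>X - M * \<eta>\<bar> + \<bar>\<eta> * (M - Y)\<bar>"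
    using abs_triangle_ineq[of "X - M * \<eta>" "\<eta> * (M - Y)"] by (simp add: algebra_simps)
  ultimately have "\<bar>X - \<eta> * Y\<bar> \<le> D + C"
    using assms(1,3) by (simp add: abs_mult)
  then have "\<bar>X - \<eta> * Y\<bar> / Y \<le> (D + C) / (M - C)"
    using Y assms(5) by (intro frac_le) auto
  moreover have "\<bar>X / Y - \<eta>\<bar> = \<bar>X - \<eta> * Y\<bar> / Y"
    using Y by (simp add: field_simps)
  ultimately show ?thesis
    by simp
qed

lemma Delta_cycle_decomposition:
  assumes "k \<ge> 1" and \<eta>: "\<eta> \<in> Delta b k"
  obtains R :: nat and lam ws where "\<And>r. r < R \<Longrightarrow> 0 \<le> lam r \<and> ws r \<noteq> [] \<and> set (ws r) \<subseteq> {..<b}"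
    and "\<And>s. s \<in> strings b k \<Longrightarrow> \<eta> s = (\<Sum>r<R. lam r * cyclic_count (ws r) s)"
    and "(\<Sum>r<R. lam r * real (length (ws r))) = 1"
proof -
  obtain R :: nat and lam ws where ws: "\<And>r. r < R \<Longrightarrow> 0 \<le> lam r \<and> ws r \<noteq> [] \<and> set (ws r) \<subseteq> {..<b}"
    and \<eta>_eq: "\<And>s. s \<in> strings b k \<Longrightarrow> \<eta> s = (\<Sum>r<R. lam r * cyclic_count (ws r) s)"
    using de_bruijn_circulation_decomposition[OF Delta_imp_de_bruijn_circulation[OF \<eta>] \<open>k \<ge> 1\<close>]
    by blast
  have "1 = (\<Sum>s\<in>strings b k. \<Sum>r<R. lam r * cyclic_count (ws r) s)"
    using \<eta> \<eta>_eq by (simp add: Delta_def)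
  also have "\<dots> = (\<Sum>r<R. lam r * (\<Sum>s\<in>strings b k. cyclic_count (ws r) s))"
    by (simp add: sum.swap[of _ "strings b k"] sum_distrib_left)
  also have "\<dots> = (\<Sum>r<R. lam r * real (length (ws r)))"
    using ws sum_cyclic_count_strings by simp
  finally show thesis
    using that[OF ws \<eta>_eq] by simp
qed

lemma concat_repeat_words_estimates:
  fixes lam :: "nat \<Rightarrow> real" and ws :: "nat \<Rightarrow> nat list" and M :: nat
  assumes ws: "\<And>r. r < R \<Longrightarrow> 0 \<le> lam r \<and> ws r \<noteq> []"
  defines "W \<equiv> concat (map (\<lambda>r. repeat_word (nat \<lfloor>lam r * real M\<rfloor>) (ws r)) [0..<R])"
  shows "\<bar>real (length W) - real M * (\<Sum>r<R. lam r * real (length (ws r)))\<bar> \<le> (\<Sum>r<R. real (length (ws r)))"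
    and "\<bar>cyclic_count W s - real M * (\<Sum>r<R. lam r * cyclic_count (ws r) s)\<bar>
      \<le> (\<Sum>r<R. real (length (ws r))) + 2 * real (length s) * real R"
proof -
  show "\<bar>real (length W) - real M * (\<Sum>r<R. lam r * real (length (ws r)))\<bar> \<le> (\<Sum>r<R. real (length (ws r)))"
    using abs_sum_floor_scaled_diff_le[of R lam "\<lambda>r. real (length (ws r))" "real M"] ws
    unfolding W_def length_concat_repeat_words by simp
  have "\<bar>cyclic_count W s - (\<Sum>r<R. real (nat \<lfloor>lam r * real M\<rfloor>) * cyclic_count (ws r) s)\<bar>
      \<le> 2 * real (length s) * real R"
    unfolding W_def by (rule cyclic_count_concat_repeat_words) (use ws in blast)
  moreover have "\<bar>(\<Sum>r<R. real (nat \<lfloor>lam r * real M\<rfloor>) * cyclic_count (ws r) s) -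
      real M * (\<Sum>r<R. lam r * cyclic_count (ws r) s)\<bar> \<le> (\<Sum>r<R. cyclic_count (ws r) s)"
    by (rule abs_sum_floor_scaled_diff_le) (simp_all add: ws cyclic_count_nonneg)
  moreover have "(\<Sum>r<R. cyclic_count (ws r) s) \<le> (\<Sum>r<R. real (length (ws r)))"
    by (intro sum_mono cyclic_count_le_length)
  ultimately show "\<bar>cyclic_count W s - real M * (\<Sum>r<R. lam r * cyclic_count (ws r) s)\<bar>
      \<le> (\<Sum>r<R. real (length (ws r))) + 2 * real (length s) * real R"
    by linarith
qed

lemma Delta_approx_cyclic_word:
  assumes "k \<ge> 1" and \<eta>: "\<eta> \<in> Delta b k" and "0 < \<epsilon>"
  obtains w where "w \<noteq> []" and "set w \<subseteq> {..<b}"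
    and "\<And>s. s \<in> strings b k \<Longrightarrow> \<bar>cyclic_count w s / real (length w) - \<eta> s\<bar> < \<epsilon>"
proof -
  obtain R :: nat and lam ws where ws: "\<And>r. r < R \<Longrightarrow> 0 \<le> lam r \<and> ws r \<noteq> [] \<and> set (ws r) \<subseteq> {..<b}"
    and \<eta>_eq: "\<And>s. s \<in> strings b k \<Longrightarrow> \<eta> s = (\<Sum>r<R. lam r * cyclic_count (ws r) s)"
    and lam_sum: "(\<Sum>r<R. lam r * real (length (ws r))) = 1"
    using Delta_cycle_decomposition[OF \<open>k \<ge> 1\<close> \<eta>] by blast
  define C where "C = (\<Sum>r<R. real (length (ws r)))"
  define K where "K = 2 * real k * real R"
  obtain M :: nat where M: "C + (2 * C + K) / \<epsilon> < real M"
    using reals_Archimedean2 by blast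
  have "0 \<le> (2 * C + K) / \<epsilon>"
    using \<open>0 < \<epsilon>\<close> by (simp add: C_def K_def sum_nonneg)
  with M have "C < real M" and "(2 * C + K) / \<epsilon> < real M - C"
    by linarith+
  then have "2 * C + K < \<epsilon> * (real M - C)"
    using \<open>0 < \<epsilon>\<close> by (simp add: pos_divide_less_eq mult.commute)
  then have "(2 * C + K) / (real M - C) < \<epsilon>"
    using \<open>C < real M\<close> by (simp add: pos_divide_less_eq mult.commute)
  define W where "W = concat (map (\<lambda>r. repeat_word (nat \<lfloor>lam r * real M\<rfloor>) (ws r)) [0..<R])"
  have length_W: "\<bar>real (length W) - real M\<bar> \<le> C"
    using concat_repeat_words_estimates(1)[of R lam ws M] ws lam_sum by (simp add: W_def C_def)
  show thesis
  proof
    show "W \<noteq> []"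
      using length_W \<open>C < real M\<close> by auto
    show "set W \<subseteq> {..<b}"
      using ws set_repeat_word unfolding W_def by fastforce
    fix s assume s: "s \<in> strings b k"
    have count_W: "\<bar>cyclic_count W s - real M * \<eta> s\<bar> \<le> C + K"
      using concat_repeat_words_estimates(2)[of R lam ws M s] ws \<eta>_eq[OF s] s
      by (simp add: W_def C_def K_def strings_def)
    have "0 \<le> \<eta> s" "\<eta> s \<le> 1"
      using \<eta> s member_le_sum[OF s, of \<eta>] finite_strings by (auto simp: Delta_def)
    then have "\<bar>cyclic_count W s / real (length W) - \<eta> s\<bar> \<le> (C + K + C) / (real M - C)"
      by (rule abs_divide_diff_le[OF count_W length_W _ _ \<open>C < real M\<close>])
    then show "\<bar>cyclic_count W s / real (length W) - \<eta> s\<bar> < \<epsilon>"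
      using \<open>(2 * C + K) / (real M - C) < \<epsilon>\<close> by (simp add: algebra_simps)
  qed
qed

section \<open>Regular matrices and pattern frequencies\<close>

lemma regular_matrixD:
  assumes "regular_matrix a" and "g \<longlonglongrightarrow> l"
  shows "summable (\<lambda>i. a n i * g i)" and "(\<lambda>n. \<Sum>i. a n i * g i) \<longlonglongrightarrow> l"
  using assms(1)[unfolded regular_matrix_def, rule_format, of 1 "\<lambda>i j. g i" "\<lambda>j. l"] assms(2)
  by auto

text \<open>The Abel--Dini theorem.\<close>

lemma not_summable_divide_partial_sums:
  fixes c :: "nat \<Rightarrow> real"
  assumes c: "\<And>i. 0 \<le> c i" and "\<not> summable c"
  shows "\<not> summable (\<lambda>i. c i / (\<Sum>j\<le>i. c j))"
proof
  define P where "P n = (\<Sum>j\<le>n. c j)" for n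
  have P_mono: "P m \<le> P n" if "m \<le> n" for m n
    unfolding P_def using that c by (intro sum_mono2) auto
  have "\<exists>n. B < P n" for B
    using bounded_imp_summable[of c B] c \<open>\<not> summable c\<close> by (force simp: P_def not_less)
  assume "summable (\<lambda>i. c i / P i)"
  then obtain N where N: "\<And>n. \<bar>\<Sum>i\<in>{Suc N..<n}. c i / P i\<bar> < 1 / 2"
    unfolding summable_Cauchy by (metis half_gt_zero le_SucI order.refl real_norm_def zero_less_one)
  obtain n where n: "2 * P N + 1 < P n"
    using \<open>\<And>B. \<exists>n. B < P n\<close> by blast
  have "0 \<le> P N"
    unfolding P_def using c by (simp add: sum_nonneg)
  then have "N \<le> n" "0 < P n"
    using n P_mono[of n N] by (linarith, linarith)
  have "(\<Sum>i\<in>{Suc N..<Suc n}. c i / P n) \<le> (\<Sum>i\<in>{Suc N..<Suc n}. c i / P i)"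
  proof (rule sum_mono)
    fix i assume "i \<in> {Suc N..<Suc n}"
    then have "P i \<le> P n" "c i \<le> P i"
      using P_mono[of i n] member_le_sum[of i "{..i}" c] c by (auto simp: P_def)
    then show "c i / P n \<le> c i / P i"
      using c[of i] by (cases "c i = 0") (auto intro: divide_left_mono)
  qed
  moreover have "(\<Sum>i\<in>{Suc N..<Suc n}. c i) = P n - P N"
    using sum.atLeastLessThan_concat[of 0 "Suc N" "Suc n" c] \<open>N \<le> n\<close>
    by (simp add: P_def atLeast0LessThan lessThan_Suc_atMost)
  then have "(\<Sum>i\<in>{Suc N..<Suc n}. c i / P n) = (P n - P N) / P n"
    by (simp add: sum_divide_distrib[symmetric])
  moreover have "1 / 2 \<le> (P n - P N) / P n"
    using n \<open>0 < P n\<close> \<open>0 \<le> P N\<close> by (simp add: field_simps)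
  ultimately show False
    using N[of "Suc n"] by linarith
qed

lemma summable_abs_if_summable_mult_null:
  fixes c :: "nat \<Rightarrow> real"
  assumes "\<And>g. g \<longlonglongrightarrow> 0 \<Longrightarrow> summable (\<lambda>i. c i * g i)"
  shows "summable (\<lambda>i. \<bar>c i\<bar>)"
proof (rule ccontr)
  assume ns: "\<not> summable (\<lambda>i. \<bar>c i\<bar>)"
  define P where "P n = (\<Sum>j\<le>n. \<bar>c j\<bar>)" for n
  have "filterlim P at_top sequentially"
    unfolding filterlim_at_top
  proof
    fix B
    obtain n where "B < P n"
      using bounded_imp_summable[of "\<lambda>i. \<bar>c i\<bar>" B] ns by (force simp: P_def not_less)
    moreover have "P n \<le> P m" if "n \<le> m" for m
      unfolding P_def using that by (intro sum_mono2) auto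
    ultimately show "\<forall>\<^sub>F m in sequentially. B \<le> P m"
      by (intro eventually_sequentiallyI[of n]) force
  qed
  then have lim: "(\<lambda>i. inverse (P i)) \<longlonglongrightarrow> 0"
    by (rule tendsto_inverse_0_at_top)
  have bound: "norm (sgn (c i) / P i) \<le> inverse (P i)" for i
  proof -
    have "0 \<le> P i"
      by (simp add: P_def sum_nonneg)
    then show ?thesis
      by (cases "c i = 0") (simp_all add: abs_mult abs_sgn_eq divide_inverse)
  qed
  have "(\<lambda>i. sgn (c i) / P i) \<longlonglongrightarrow> 0"
    by (rule Lim_null_comparison[OF always_eventually[OF allI[OF bound]] lim])
  then have "summable (\<lambda>i. c i * (sgn (c i) / P i))"
    by (rule assms)
  moreover have "(\<lambda>i. c i * (sgn (c i) / P i)) = (\<lambda>i. \<bar>c i\<bar> / P i)"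
    by (simp add: sgn_if fun_eq_iff)
  ultimately show False
    using not_summable_divide_partial_sums[of "\<lambda>i. \<bar>c i\<bar>"] ns by (simp add: P_def)
qed

lemma regular_matrix_summable_abs_row:
  assumes "regular_matrix a"
  shows "summable (\<lambda>i. \<bar>a n i\<bar>)"
  by (rule summable_abs_if_summable_mult_null) (rule regular_matrixD(1)[OF assms])

lemma sum_eventually_periodic_deviation_bounded:
  fixes f F :: "nat \<Rightarrow> real"
  assumes "0 < L" and f: "\<And>t. f (P + t) = F (t mod L)"
  obtains B where "\<And>r. \<bar>(\<Sum>i<P + r. f i) - real (P + r) * ((\<Sum>t<L. F t) / real L)\<bar> \<le> B"
proof
  define S where "S = (\<Sum>t<L. F t)"
  fix r
  have "(\<Sum>i<P + r. f i) = (\<Sum>i<P. f i) + real (r div L) * S + (\<Sum>t<r mod L. F t)"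
    using f sum_lessThan_mod[where F = F and m = r and L = L] by (simp add: sum_lessThan_add S_def)
  moreover have "real r = real (r div L) * real L + real (r mod L)"
    using div_mult_mod_eq[of r L] by (metis of_nat_add of_nat_mult)
  then have "real (P + r) * (S / real L) = real P * S / real L + real (r div L) * S + real (r mod L) * S / real L"
    using \<open>0 < L\<close> by (simp add: field_simps)
  moreover have "\<bar>\<Sum>t<r mod L. F t\<bar> \<le> (\<Sum>t<L. \<bar>F t\<bar>)"
    using \<open>0 < L\<close> by (intro order_trans[OF sum_abs] sum_mono2) auto
  moreover have "\<bar>real (r mod L) * S / real L\<bar> \<le> \<bar>S\<bar>"
  proof -
    have "real (r mod L) / real L \<le> 1"
      using \<open>0 < L\<close> by simp
    then have "real (r mod L) / real L * \<bar>S\<bar> \<le> \<bar>S\<bar>"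
      by (intro mult_left_le_one_le) auto
    then show ?thesis
      by (simp add: abs_mult)
  qed
  ultimately show "\<bar>(\<Sum>i<P + r. f i) - real (P + r) * (S / real L)\<bar>
      \<le> \<bar>\<Sum>i<P. f i\<bar> + \<bar>real P * S / real L\<bar> + (\<Sum>t<L. \<bar>F t\<bar>) + \<bar>S\<bar>"
    by (smt (verit))
qed

lemma tendsto_divide_of_nat_if_deviation_bounded:
  fixes g :: "nat \<Rightarrow> real"
  assumes "\<And>r. \<bar>g (P + r) - real (P + r) * c\<bar> \<le> B"
  shows "(\<lambda>n. g n / real n) \<longlonglongrightarrow> c"
proof -
  have "(\<lambda>n. g n / real n - c) \<longlonglongrightarrow> 0"
  proof (rule Lim_null_comparison)
    show "\<forall>\<^sub>F n in sequentially. norm (g n / real n - c) \<le> B / real n"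
    proof (rule eventually_sequentiallyI[of "Suc P"])
      fix n assume "Suc P \<le> n"
      then have "0 < n" and "\<bar>g n - real n * c\<bar> \<le> B"
        using assms[of "n - P"] by simp_all
      moreover have "g n / real n - c = (g n - real n * c) / real n"
        using \<open>0 < n\<close> by (simp add: diff_divide_distrib)
      ultimately show "norm (g n / real n - c) \<le> B / real n"
        by (simp add: abs_divide divide_right_mono)
    qed
    show "(\<lambda>n. B / real n) \<longlonglongrightarrow> 0"
      by (rule lim_const_over_n)
  qed
  then show ?thesis
    by (simp add: LIM_zero_iff)
qed

lemma cesaro_mean_eventually_periodic:
  fixes f F :: "nat \<Rightarrow> real"
  assumes "0 < L" and "\<And>t. f (P + t) = F (t mod L)"
  shows "(\<lambda>n. (\<Sum>i<n. f i) / real n) \<longlonglongrightarrow> (\<Sum>t<L. F t) / real L"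
proof -
  obtain B where "\<And>r. \<bar>(\<Sum>i<P + r. f i) - real (P + r) * ((\<Sum>t<L. F t) / real L)\<bar> \<le> B"
    using sum_eventually_periodic_deviation_bounded[where f = f and F = F and P = P and L = L, OF assms]
    by blast
  then show ?thesis
    by (rule tendsto_divide_of_nat_if_deviation_bounded[where g = "\<lambda>n. \<Sum>i<n. f i"])
qed

definition pattern_freq :: "(nat \<Rightarrow> nat) \<Rightarrow> nat list \<Rightarrow> nat \<Rightarrow> real" where
  "pattern_freq e s n = real (card {i \<in> {1..n}. \<forall>j<length s. e (i + j) = s ! j}) / real n"

lemma freq_eq_pattern_freq: "freq b s n x = pattern_freq (digit b x) s n"
  by (simp add: freq_def pattern_freq_def)

lemma pattern_freq_bounds: "0 \<le> pattern_freq e s n" "pattern_freq e s n \<le> 1"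
proof -
  have "card {i \<in> {1..n}. \<forall>j<length s. e (i + j) = s ! j} \<le> card {1..n}"
    by (intro card_mono) auto
  then show "pattern_freq e s n \<le> 1"
    by (cases "n = 0") (simp_all add: pattern_freq_def)
qed (simp add: pattern_freq_def)

lemma pattern_freq_eq_mean:
  "pattern_freq e s n = (\<Sum>i<n. if \<forall>j<length s. e (Suc i + j) = s ! j then 1 else 0) / real n"
proof -
  have "real (card {i \<in> {1..n}. \<forall>j<length s. e (i + j) = s ! j}) =
      (\<Sum>i\<in>{1..n}. if \<forall>j<length s. e (i + j) = s ! j then 1 else 0)"
    by (simp add: sum.If_cases Int_def)
  also have "\<dots> = (\<Sum>i<n. if \<forall>j<length s. e (Suc i + j) = s ! j then 1 else 0)"
    by (simp add: sum.atLeast1_atMost_eq)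
  finally show ?thesis
    by (simp add: pattern_freq_def)
qed

lemma pattern_freq_eventually_periodic:
  assumes "w \<noteq> []" and e: "\<And>i. e (Suc (P + i)) = w ! (i mod length w)"
  shows "(\<lambda>n. pattern_freq e s n) \<longlonglongrightarrow> cyclic_count w s / real (length w)"
proof -
  define F where "F t = (if cyclic_window w (length s) t = s then 1 else (0::real))" for t
  have "(\<forall>j<length s. e (Suc (P + t) + j) = s ! j) \<longleftrightarrow> cyclic_window w (length s) t = s" for t
  proof -
    have "e (Suc (P + t) + j) = cyclic_window w (length s) t ! j" if "j < length s" for j
      using that e[of "t + j"] by (simp add: nth_cyclic_window add.assoc)
    then show ?thesis
      by (auto simp: list_eq_iff_nth_eq)
  qed
  then have "(if \<forall>j<length s. e (Suc (P + t) + j) = s ! j then 1 else 0) = F (t mod length w)" for t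
    by (simp add: F_def cyclic_window_mod)
  then have "(\<lambda>n. (\<Sum>i<n. if \<forall>j<length s. e (Suc i + j) = s ! j then 1 else 0) / real n)
      \<longlonglongrightarrow> (\<Sum>t<length w. F t) / real (length w)"
    using \<open>w \<noteq> []\<close> by (intro cesaro_mean_eventually_periodic[where P = P]) auto
  then show ?thesis
    by (simp add: pattern_freq_eq_mean F_def cyclic_count_def)
qed

section \<open>Cluster points along blocks\<close>

lemma nowhere_dense_inI:
  assumes "N \<subseteq> topspace X"
    and "\<And>V. openin X V \<Longrightarrow> V \<noteq> {} \<Longrightarrow> \<exists>W. openin X W \<and> W \<noteq> {} \<and> W \<subseteq> V \<and> W \<inter> N = {}"
  shows "nowhere_dense_in X N"
proof -
  have "T = {}" if T: "openin X T" "T \<subseteq> X closure_of N" for T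
  proof (rule ccontr)
    assume "T \<noteq> {}"
    then obtain W where W: "openin X W" "W \<noteq> {}" "W \<subseteq> T" "W \<inter> N = {}"
      using assms(2) T(1) by blast
    then have "W \<inter> X closure_of N = {}"
      by (simp add: openin_Int_closure_of_eq_empty)
    with W(2,3) T(2) show False
      by blast
  qed
  then show ?thesis
    using assms(1) unfolding nowhere_dense_in_def interior_of_eq_empty by blast
qed

lemma comeager_inI:
  assumes "countable J" and "\<And>j. j \<in> J \<Longrightarrow> nowhere_dense_in X (topspace X - G j)"
    and "topspace X \<inter> (\<Inter>j\<in>J. G j) \<subseteq> S"
  shows "comeager_in X S"
  unfolding comeager_in_def meager_in_def
proof (intro conjI exI)
  show "countable ((\<lambda>j. topspace X - G j) ` J)"
    using assms(1) by simp
  show "\<forall>D\<in>(\<lambda>j. topspace X - G j) ` J. nowhere_dense_in X D"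
    using assms(2) by blast
  show "topspace X - S \<subseteq> \<Union>((\<lambda>j. topspace X - G j) ` J)"
    using assms(3) by blast
qed blast

lemma openin_Rstrings_box:
  assumes "openin (Rstrings b k) U" and "\<eta> \<in> U"
  obtains \<epsilon> where "0 < \<epsilon>"
    and "\<And>p. p \<in> extensional (strings b k) \<Longrightarrow> (\<forall>s\<in>strings b k. \<bar>p s - \<eta> s\<bar> < \<epsilon>) \<Longrightarrow> p \<in> U"
proof -
  obtain V where V: "\<And>s. s \<in> strings b k \<Longrightarrow> open (V s)" "\<eta> \<in> PiE (strings b k) V"
    "PiE (strings b k) V \<subseteq> U"
    using assms unfolding Rstrings_def openin_product_topology_alt by (metis open_openin)
  have "\<forall>\<^sub>F \<epsilon> in at_right 0. \<forall>s\<in>strings b k. ball (\<eta> s) \<epsilon> \<subseteq> V s"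
  proof (intro eventually_ball_finite finite_strings ballI)
    fix s assume s: "s \<in> strings b k"
    then obtain e where e: "0 < e" "ball (\<eta> s) e \<subseteq> V s"
      using V(1,2) open_contains_ball by (metis PiE_mem)
    have "\<forall>\<^sub>F \<epsilon> in at_right 0. \<epsilon> \<in> {0<..<e}"
      by (rule eventually_at_right_real[OF e(1)])
    then show "\<forall>\<^sub>F \<epsilon> in at_right 0. ball (\<eta> s) \<epsilon> \<subseteq> V s"
      by (rule eventually_mono) (use e(2) in auto)
  qed
  then have "\<forall>\<^sub>F \<epsilon> in at_right 0. 0 < \<epsilon> \<and> (\<forall>s\<in>strings b k. ball (\<eta> s) \<epsilon> \<subseteq> V s)"
    using eventually_at_right_less by eventually_elim auto
  then obtain \<epsilon> where \<epsilon>: "0 < \<epsilon>" "\<And>s. s \<in> strings b k \<Longrightarrow> ball (\<eta> s) \<epsilon> \<subseteq> V s"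
    using eventually_happens'[OF trivial_limit_at_right_real] by blast
  show thesis
  proof (rule that[OF \<open>0 < \<epsilon>\<close>])
    fix p assume "p \<in> extensional (strings b k)" and "\<forall>s\<in>strings b k. \<bar>p s - \<eta> s\<bar> < \<epsilon>"
    then have "p \<in> PiE (strings b k) V"
      using \<epsilon>(2) by (force simp: PiE_iff dist_real_def abs_minus_commute)
    then show "p \<in> U"
      using V(3) by blast
  qed
qed

definition block_close_set ::
    "(nat \<Rightarrow> nat \<Rightarrow> real) \<Rightarrow> (nat \<Rightarrow> nat) \<Rightarrow> nat \<Rightarrow> nat \<Rightarrow> nat list \<Rightarrow> real \<Rightarrow> nat \<Rightarrow> real set" where
  "block_close_set a N b k w \<epsilon> j0 = {x. \<exists>j\<ge>j0. \<forall>n\<in>{N j..<N (Suc j)}. \<forall>s\<in>strings b k.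
     \<bar>Api a b k x n s - cyclic_count w s / real (length w)\<bar> < \<epsilon>}"

lemma Delta_subset_Gamma_clust:
  fixes N :: "nat \<Rightarrow> nat"
  assumes I: "\<And>S. (\<exists>\<^sub>F j in sequentially. {N j..<N (Suc j)} \<subseteq> S) \<Longrightarrow> S \<notin> I" and "k \<ge> 1"
    and x: "\<And>w m j0. w \<noteq> [] \<Longrightarrow> set w \<subseteq> {..<b} \<Longrightarrow> x \<in> block_close_set a N b k w (1 / real (Suc m)) j0"
  shows "Delta b k \<subseteq> Gamma_clust b k x I a"
proof
  fix \<eta> assume \<eta>: "\<eta> \<in> Delta b k"
  have "{n. Api a b k x n \<in> U} \<notin> I" if U: "openin (Rstrings b k) U" "\<eta> \<in> U" for U
  proof -
    obtain \<epsilon> where "0 < \<epsilon>" and box: "\<And>p. p \<in> extensional (strings b k) \<Longrightarrow>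
        (\<forall>s\<in>strings b k. \<bar>p s - \<eta> s\<bar> < \<epsilon>) \<Longrightarrow> p \<in> U"
      using openin_Rstrings_box[OF U] by blast
    then obtain w where w: "w \<noteq> []" "set w \<subseteq> {..<b}"
      and approx: "\<And>s. s \<in> strings b k \<Longrightarrow> \<bar>cyclic_count w s / real (length w) - \<eta> s\<bar> < \<epsilon> / 2"
      using Delta_approx_cyclic_word[OF \<open>k \<ge> 1\<close> \<eta>, of "\<epsilon> / 2"] by auto
    obtain m where m: "1 / real (Suc m) < \<epsilon> / 2"
      using \<open>0 < \<epsilon>\<close> by (metis half_gt_zero nat_approx_posE)
    have "{N j..<N (Suc j)} \<subseteq> {n. Api a b k x n \<in> U}"
      if j: "\<forall>n\<in>{N j..<N (Suc j)}. \<forall>s\<in>strings b k.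
        \<bar>Api a b k x n s - cyclic_count w s / real (length w)\<bar> < 1 / real (Suc m)" for j
    proof
      fix n assume "n \<in> {N j..<N (Suc j)}"
      have "\<bar>Api a b k x n s - \<eta> s\<bar> < \<epsilon>" if s: "s \<in> strings b k" for s
      proof -
        have "\<bar>Api a b k x n s - cyclic_count w s / real (length w)\<bar> < \<epsilon> / 2"
          using j \<open>n \<in> {N j..<N (Suc j)}\<close> s m by fastforce
        with approx[OF s] show ?thesis
          unfolding abs_diff_less_iff by linarith
      qed
      then show "n \<in> {n. Api a b k x n \<in> U}"
        using box by (simp add: Api_def)
    qed
    then have "\<exists>\<^sub>F j in sequentially. {N j..<N (Suc j)} \<subseteq> {n. Api a b k x n \<in> U}"
      using x[OF w] unfolding frequently_sequentially block_close_set_def by blast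
    then show ?thesis
      by (rule I)
  qed
  moreover have "\<eta> \<in> topspace (Rstrings b k)"
    using \<eta> by (simp add: Rstrings_def Delta_def PiE_iff)
  ultimately show "\<eta> \<in> Gamma_clust b k x I a"
    by (simp add: Gamma_clust_def I_cluster_point_def)
qed

section \<open>Comeagerness\<close>

lemma pattern_freq_eq_if_prefix_eq:
  assumes "\<And>i. 0 < i \<Longrightarrow> i \<le> P \<Longrightarrow> e i = e' i" and "n + length s \<le> Suc P"
  shows "pattern_freq e s n = pattern_freq e' s n"
proof -
  have "(\<forall>j<length s. e (i + j) = s ! j) \<longleftrightarrow> (\<forall>j<length s. e' (i + j) = s ! j)" if "i \<in> {1..n}" for i
    using that assms by auto
  then show ?thesis
    unfolding pattern_freq_def by (metis (no_types, lifting) Collect_cong)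
qed

lemma abs_suminf_mult_diff_le:
  fixes c g h :: "nat \<Rightarrow> real"
  assumes c: "summable (\<lambda>i. \<bar>c i\<bar>)" and g: "\<And>i. g i \<in> {0..1}" and h: "\<And>i. h i \<in> {0..1}"
    and eq: "\<And>i. i < M \<Longrightarrow> g i = h i"
  shows "\<bar>(\<Sum>i. c i * g i) - (\<Sum>i. c i * h i)\<bar> \<le> (\<Sum>i. \<bar>c (i + M)\<bar>)"
proof -
  have bound: "\<bar>c i * (g i - h i)\<bar> \<le> \<bar>c i\<bar>" for i
  proof -
    have "\<bar>g i - h i\<bar> \<le> 1"
      using g[of i] h[of i] by auto
    then show ?thesis
      by (simp add: abs_mult mult_left_le)
  qed
  have "summable (\<lambda>i. c i * g i)" "summable (\<lambda>i. c i * h i)"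
    using g h by (auto intro!: summable_comparison_test[OF _ c] simp: abs_mult mult_left_le)
  then have "(\<Sum>i. c i * g i) - (\<Sum>i. c i * h i) = (\<Sum>i. c i * (g i - h i))"
    by (simp add: suminf_diff right_diff_distrib)
  also have "\<dots> = (\<Sum>i. c (i + M) * (g (i + M) - h (i + M)))"
    using suminf_split_initial_segment[of "\<lambda>i. c i * (g i - h i)" M] eq
      summable_comparison_test[OF _ c, of "\<lambda>i. c i * (g i - h i)"] bound by simp
  finally show ?thesis
    using bound summable_ignore_initial_segment[OF c, of M]
    by (auto intro!: order_trans[OF summable_rabs] suminf_le
        intro: summable_comparison_test[OF _ summable_ignore_initial_segment[OF c, of M]])
qed

lemma regular_matrix_uniform_row_tail:
  assumes "regular_matrix a" and "finite A" and "0 < \<epsilon>"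
  obtains M where "\<And>n. n \<in> A \<Longrightarrow> (\<Sum>i. \<bar>a n (i + M)\<bar>) < \<epsilon>"
proof -
  have "\<forall>\<^sub>F M in sequentially. \<forall>n\<in>A. (\<Sum>i. \<bar>a n (i + M)\<bar>) < \<epsilon>"
  proof (intro eventually_ball_finite \<open>finite A\<close> ballI)
    fix n
    obtain M0 where "\<And>M. M0 \<le> M \<Longrightarrow> norm (\<Sum>i. \<bar>a n (i + M)\<bar>) < \<epsilon>"
      using suminf_exist_split[OF \<open>0 < \<epsilon>\<close> regular_matrix_summable_abs_row[OF assms(1)]] by blast
    then show "\<forall>\<^sub>F M in sequentially. (\<Sum>i. \<bar>a n (i + M)\<bar>) < \<epsilon>"
      by (intro eventually_sequentiallyI[of M0]) force
  qed
  then show thesis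
    using that by (auto simp: eventually_sequentially)
qed

lemma openin_contains_digit_cylinders:
  assumes b: "b \<ge> 2" and V: "openin (subtopology euclideanreal {0<..1}) V" and "x0 \<in> V"
  obtains P0 where "\<And>e P. \<forall>i<P. e (Suc i) < b \<Longrightarrow> P0 \<le> P \<Longrightarrow>
    (\<And>i. i < P0 \<Longrightarrow> e (Suc i) = digit b x0 (Suc i)) \<Longrightarrow> digit_cylinder b e P \<subseteq> V"
proof -
  obtain T where "openin euclideanreal T" and V_eq: "V = T \<inter> {0<..1}"
    using V unfolding openin_subtopology by blast
  then have "open T"
    using open_openin by blast
  moreover have "x0 \<in> T"
    using \<open>x0 \<in> V\<close> V_eq by blast
  ultimately obtain r where "0 < r" and r: "ball x0 r \<subseteq> T"
    using open_contains_ball_eq by blast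
  obtain P0 where "(1 / real b) ^ P0 < r"
    using real_arch_pow_inv[OF \<open>0 < r\<close>, of "1 / real b"] b by auto
  then have P0: "1 / real b ^ P0 < r"
    by (simp add: power_one_over)
  show thesis
  proof (rule that, rule subsetI)
    fix e P x assume e: "\<forall>i<P. e (Suc i) < b" and "P0 \<le> P"
      and prefix: "\<And>i. i < P0 \<Longrightarrow> e (Suc i) = digit b x0 (Suc i)" and x: "x \<in> digit_cylinder b e P"
    have x01: "0 < x" "x \<le> 1"
      using digit_cylinder_subset[OF b e] x by auto
    have "\<forall>i<P0. digit b x (Suc i) = digit b x0 (Suc i)"
      using digit_eq_on_digit_cylinder[OF b e x] prefix \<open>P0 \<le> P\<close> by auto
    then have "\<bar>x - x0\<bar> < 1 / real b ^ P0"
      using dist_less_if_digits_eq[OF b x01] \<open>x0 \<in> V\<close> V_eq by auto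
    then show "x \<in> V"
      using P0 r x01 V_eq by (auto simp: dist_real_def abs_minus_commute)
  qed
qed

lemma regular_matrix_pattern_freq_periodic:
  assumes "regular_matrix a" and "w \<noteq> []" and "\<And>i. e (Suc (P + i)) = w ! (i mod length w)"
  shows "(\<lambda>n. \<Sum>i. a n i * pattern_freq e s (Suc i)) \<longlonglongrightarrow> cyclic_count w s / real (length w)"
  by (rule regular_matrixD(2)[OF assms(1) LIMSEQ_Suc[OF pattern_freq_eventually_periodic[OF assms(2,3)]]])

lemma Api_diff_le_row_tail:
  assumes reg: "regular_matrix a" and s: "s \<in> strings b k"
    and digits: "\<And>i. i < M + k \<Longrightarrow> digit b x (Suc i) = e (Suc i)"
  shows "\<bar>Api a b k x n s - (\<Sum>i. a n i * pattern_freq e s (Suc i))\<bar> \<le> (\<Sum>i. \<bar>a n (i + M)\<bar>)"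
proof -
  have "pattern_freq (digit b x) s (Suc i) = pattern_freq e s (Suc i)" if "i < M" for i
    using that s digits
    by (intro pattern_freq_eq_if_prefix_eq[where P = "M + k"]) (auto simp: strings_def gr0_conv_Suc)
  then have "\<bar>(\<Sum>i. a n i * pattern_freq (digit b x) s (Suc i)) - (\<Sum>i. a n i * pattern_freq e s (Suc i))\<bar>
      \<le> (\<Sum>i. \<bar>a n (i + M)\<bar>)"
    by (intro abs_suminf_mult_diff_le) (simp_all add: regular_matrix_summable_abs_row[OF reg] pattern_freq_bounds)
  then show ?thesis
    using s by (simp add: Api_def freq_eq_pattern_freq)
qed

text \<open>The cylinder \<open>W\<close> prescribes the digits of \<open>x0\<close> up to \<open>P0\<close>, which keeps it inside \<open>V\<close>,
  followed by the periodic word \<open>w\<close>; the rows \<open>n\<close> of the chosen block have mass below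
  \<open>\<epsilon> / 2\<close> beyond \<open>M\<close>, and up to \<open>M\<close> they only see digits fixed on \<open>W\<close>.\<close>

lemma dense_block_approximation:
  fixes a :: "nat \<Rightarrow> nat \<Rightarrow> real" and N :: "nat \<Rightarrow> nat"
  assumes reg: "regular_matrix a" and "strict_mono N" and b: "b \<ge> 2"
    and w: "w \<noteq> []" "set w \<subseteq> {..<b}" and "0 < \<epsilon>"
    and V: "openin (subtopology euclideanreal {0<..1}) V" "V \<noteq> {}"
  obtains W where "openin (subtopology euclideanreal {0<..1}) W" and "W \<noteq> {}" and "W \<subseteq> V"
    and "W \<subseteq> block_close_set a N b k w \<epsilon> j0"
proof -
  obtain x0 where "x0 \<in> V"
    using V(2) by blast
  then have x0: "0 < x0" "x0 \<le> 1"
    using openin_subset[OF V(1)] by auto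
  obtain P0 where P0: "\<And>e P. \<forall>i<P. e (Suc i) < b \<Longrightarrow> P0 \<le> P \<Longrightarrow>
      (\<And>i. i < P0 \<Longrightarrow> e (Suc i) = digit b x0 (Suc i)) \<Longrightarrow> digit_cylinder b e P \<subseteq> V"
    using openin_contains_digit_cylinders[OF b V(1) \<open>x0 \<in> V\<close>] by blast
  define e where "e m = (if m \<le> P0 then digit b x0 m else w ! ((m - Suc P0) mod length w))" for m
  have "w ! i < b" if "i < length w" for i
    using w(2) nth_mem[OF that] by auto
  then have e_less: "\<forall>i<P. e (Suc i) < b" for P
    using digit_less[OF b x0] w(1) by (simp add: e_def)
  have "\<forall>\<^sub>F n in sequentially. \<forall>s\<in>strings b k.
      dist (\<Sum>i. a n i * pattern_freq e s (Suc i)) (cyclic_count w s / real (length w)) < \<epsilon> / 2"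
    using regular_matrix_pattern_freq_periodic[OF reg w(1), of e P0] \<open>0 < \<epsilon>\<close>
    by (intro eventually_ball_finite finite_strings ballI tendstoD) (auto simp: e_def)
  then obtain N0 where N0: "\<And>n s. N0 \<le> n \<Longrightarrow> s \<in> strings b k \<Longrightarrow>
      \<bar>(\<Sum>i. a n i * pattern_freq e s (Suc i)) - cyclic_count w s / real (length w)\<bar> < \<epsilon> / 2"
    unfolding eventually_sequentially dist_real_def by blast
  define j where "j = max j0 N0"
  have "N0 \<le> N j"
    using seq_suble[OF \<open>strict_mono N\<close>, of j] by (simp add: j_def)
  obtain M where M: "\<And>n. n \<in> {N j..<N (Suc j)} \<Longrightarrow> (\<Sum>i. \<bar>a n (i + M)\<bar>) < \<epsilon> / 2"
    using regular_matrix_uniform_row_tail[OF reg, of "{N j..<N (Suc j)}" "\<epsilon> / 2"] \<open>0 < \<epsilon>\<close> by auto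
  define W where "W = digit_cylinder b e (P0 + M + k)"
  show thesis
  proof
    show "openin (subtopology euclideanreal {0<..1}) W" "W \<noteq> {}"
      unfolding W_def using openin_digit_cylinder[OF b e_less] digit_cylinder_nonempty[OF b] by auto
    show "W \<subseteq> V"
      unfolding W_def by (rule P0[OF e_less]) (simp_all add: e_def)
    show "W \<subseteq> block_close_set a N b k w \<epsilon> j0"
      unfolding block_close_set_def
    proof (intro subsetI CollectI exI[of _ j] conjI ballI)
      show "j0 \<le> j"
        by (simp add: j_def)
      fix x n s assume "x \<in> W" and n: "n \<in> {N j..<N (Suc j)}" and s: "s \<in> strings b k"
      have "\<bar>Api a b k x n s - (\<Sum>i. a n i * pattern_freq e s (Suc i))\<bar> \<le> (\<Sum>i. \<bar>a n (i + M)\<bar>)"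
        using digit_eq_on_digit_cylinder[OF b e_less] \<open>x \<in> W\<close> unfolding W_def
        by (intro Api_diff_le_row_tail[OF reg s]) auto
      moreover have "\<bar>(\<Sum>i. a n i * pattern_freq e s (Suc i)) - cyclic_count w s / real (length w)\<bar> < \<epsilon> / 2"
        using N0 \<open>N0 \<le> N j\<close> n s by simp
      ultimately show "\<bar>Api a b k x n s - cyclic_count w s / real (length w)\<bar> < \<epsilon>"
        using M[OF n] by linarith
    qed
  qed
qed

lemma nowhere_dense_complement_block_close_set:
  assumes "regular_matrix a" and "strict_mono N" and "b \<ge> 2" and "w \<noteq> []" and "set w \<subseteq> {..<b}"
    and "0 < \<epsilon>"
  shows "nowhere_dense_in (subtopology euclideanreal {0<..1})
    (topspace (subtopology euclideanreal {0<..1}) - block_close_set a N b k w \<epsilon> j0)"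
proof (rule nowhere_dense_inI)
  fix V assume "openin (subtopology euclideanreal {0<..1}) V" "V \<noteq> {}"
  then obtain W where "openin (subtopology euclideanreal {0<..1}) W" "W \<noteq> {}" "W \<subseteq> V"
    "W \<subseteq> block_close_set a N b k w \<epsilon> j0"
    using dense_block_approximation[OF assms] by blast
  then show "\<exists>W. openin (subtopology euclideanreal {0<..1}) W \<and> W \<noteq> {} \<and> W \<subseteq> V \<and>
      W \<inter> (topspace (subtopology euclideanreal {0<..1}) - block_close_set a N b k w \<epsilon> j0) = {}"
    by blast
qed simp

theorem theorem4p2:
  fixes I :: "nat set set" and a :: "nat \<Rightarrow> nat \<Rightarrow> real"
  assumes "meager_ideal I" and "regular_matrix a"
  shows "comeager_in (subtopology euclideanreal {0<..1})
           {x \<in> {0<..1}. \<forall>b k. b \<ge> 2 \<and> k \<ge> 1 \<longrightarrow> Delta b k \<subseteq> Gamma_clust b k x I a}"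
proof -
  obtain N where "strict_mono N" and I: "\<And>S. (\<exists>\<^sub>F j in sequentially. {N j..<N (Suc j)} \<subseteq> S) \<Longrightarrow> S \<notin> I"
    using meager_ideal_blocks[OF assms(1)] by blast
  define J :: "(nat \<times> nat \<times> nat list \<times> nat \<times> nat) set"
    where "J = {(b, k, w, m, j0). b \<ge> 2 \<and> w \<noteq> [] \<and> set w \<subseteq> {..<b}}"
  define G where "G = (\<lambda>(b, k, w, m, j0). block_close_set a N b k w (1 / real (Suc m)) j0)"
  show ?thesis
  proof (rule comeager_inI[of J _ G])
    show "countable J"
      by simp
    show "nowhere_dense_in (subtopology euclideanreal {0<..1}) (topspace (subtopology euclideanreal {0<..1}) - G i)"
      if "i \<in> J" for i
      using that nowhere_dense_complement_block_close_set[OF assms(2) \<open>strict_mono N\<close>]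
      by (auto simp: J_def G_def)
    show "topspace (subtopology euclideanreal {0<..1}) \<inter> (\<Inter>i\<in>J. G i) \<subseteq>
        {x \<in> {0<..1}. \<forall>b k. b \<ge> 2 \<and> k \<ge> 1 \<longrightarrow> Delta b k \<subseteq> Gamma_clust b k x I a}"
    proof
      fix x assume x: "x \<in> topspace (subtopology euclideanreal {0<..1}) \<inter> (\<Inter>i\<in>J. G i)"
      have "Delta b k \<subseteq> Gamma_clust b k x I a" if "b \<ge> 2" "k \<ge> 1" for b k
        by (rule Delta_subset_Gamma_clust[of N I, OF I \<open>k \<ge> 1\<close>]) (use x that in \<open>auto simp: J_def G_def\<close>)
      with x show "x \<in> {x \<in> {0<..1}. \<forall>b k. b \<ge> 2 \<and> k \<ge> 1 \<longrightarrow> Delta b k \<subseteq> Gamma_clust b k x I a}"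
        by simp
    qed
  qed
qed

end
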